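(* Let $f(X)$ be a multi-Bernoulli mixture RFS density of the form $$f(X)=\sum_{a=(h_1,\dots,h_N)\in\mathcal{A}} w_a\sum_{\biguplus_{i=1}^N X_i=X}\prod_{i=1}^N f_{h_i}(X_i),$$ and consider multi-Bernoulli densities $g(X)=\sum_{\biguplus_{j=1}^N X_j=X}\prod_{j=1}^N g_j(X_j)$ whose components $g_1,\dots,g_N$ are Bernoulli densities. Then the set of Bernoulli components $[g_j]=(g_1,\dots,g_N)$ solving $$\operatorname*{argmax}_{[g_j]}\ \sum_{a\in\mathcal{A}} w_a\int\cdots\int \prod_{i=1}^N f_{h_i}(X_i)\,\log\Big(\sum_{\pi\in\Pi_N}\prod_{i=1}^N g_{\pi(i)}(X_i)\Big)\,\delta X_1\cdots\delta X_N$$ is the same as the set of $[g_j]$ solving $$\operatorname*{argmin}_{[g_j]}\int f(X)\log\frac{f(X)}{g(X)}\,\delta X\;=\;\operatorname*{argmax}_{[g_j]}\int f(X)\log g(X)\,\delta X .$$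
   Context: Single-target states lie in $\mathcal{X}\subseteq\mathbb{R}^d$; finite subsets of $\mathcal{X}$ are denoted by capital letters. The set integral is $\int v(X)\,\delta X = v(\emptyset)+\sum_{n=1}^\infty\frac{1}{n!}\int\cdots\int v(\{x_1,\dots,x_n\})\,\mathrm{d}x_1\cdots\mathrm{d}x_n$. A Bernoulli density with existence probability $r\in[0,1]$ and state density $p(x)$ is $b(\emptyset)=1-r$, $b(\{x\})=r\,p(x)$, $b(X)=0$ for $|X|>1$. In $f$: $\mathcal{H}$ is an index set of single-target hypotheses, each $f_h$ ($h\in\mathcal{H}$) is a Bernoulli density with existence probability $r_h$ and state density $f_h(x)$; $\mathcal{A}\subseteq\mathcal{H}^N$ is a finite set of global association hypotheses $a=(h_1,\dots,h_N)$ with weights $w_a\ge 0$, $\sum_{a\in\mathcal{A}}w_a=1$. The notation $\sum_{\biguplus_{i=1}^N X_i=X}$ denotes summation over all ordered tuples of mutually disjoint subsets $X_1,\dots,X_N$ whose union is $X$. $\Pi_N$ is the set of all permutations (bijections) of $\{1,\dots,N\}$. Conventions $0\log 0=0$ are used. *)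

theory Defs
  imports "HOL-Probability.Probability" "HOL-Combinatorics.Permutations"
begin

definition is_state_pdf :: "('a::euclidean_space \<Rightarrow> real) \<Rightarrow> bool" where
  "is_state_pdf p \<longleftrightarrow> p \<in> borel_measurable lborel \<and> (\<forall>x. 0 \<le> p x)
      \<and> (\<integral>\<^sup>+ x. ennreal (p x) \<partial>lborel) = 1"

definition bernoulli_density :: "real \<Rightarrow> ('a \<Rightarrow> real) \<Rightarrow> 'a set \<Rightarrow> real" where
  "bernoulli_density r p X =
     (if X = {} then 1 - r else if card X = 1 \<and> finite X then r * p (the_elem X) else 0)"

definition is_bernoulli :: "('a::euclidean_space set \<Rightarrow> real) \<Rightarrow> bool" where
  "is_bernoulli b \<longleftrightarrow> (\<exists>r p. 0 \<le> r \<and> r \<le> 1 \<and> is_state_pdf p \<and> b = bernoulli_density r p)"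

definition disjoint_tuples :: "nat \<Rightarrow> 'a set \<Rightarrow> (nat \<Rightarrow> 'a set) set" where
  "disjoint_tuples N X = {Xs. (\<forall>i<N. \<forall>j<N. i \<noteq> j \<longrightarrow> Xs i \<inter> Xs j = {})
       \<and> (\<Union>i<N. Xs i) = X \<and> (\<forall>i\<ge>N. Xs i = {})}"

definition mb_density :: "('a set \<Rightarrow> real) list \<Rightarrow> 'a set \<Rightarrow> real" where
  "mb_density gs X = (\<Sum>Xs\<in>disjoint_tuples (length gs) X. \<Prod>i<length gs. (gs ! i) (Xs i))"

definition mbm_density :: "'h list set \<Rightarrow> ('h list \<Rightarrow> real) \<Rightarrow> ('h \<Rightarrow> 'a set \<Rightarrow> real)
      \<Rightarrow> nat \<Rightarrow> 'a set \<Rightarrow> real" where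
  "mbm_density A w f N X = (\<Sum>a\<in>A. w a *
      (\<Sum>Xs\<in>disjoint_tuples N X. \<Prod>i<N. f (a ! i) (Xs i)))"

(* set integral of a nonnegative function:
   v({}) + sum_{n>=1} 1/n! int ... int v({x_1,...,x_n}) dx_1...dx_n
   (the n = 0 term of the series below equals v({})) *)
definition rfs_nn_integral :: "('a::euclidean_space set \<Rightarrow> ennreal) \<Rightarrow> ennreal" where
  "rfs_nn_integral v = (\<Sum>n. ennreal (1 / fact n) *
       (\<integral>\<^sup>+ xs. v (xs ` {..<n}) \<partial>(PiM {..<n} (\<lambda>_. lborel))))"

definition rfs_integral :: "('a::euclidean_space set \<Rightarrow> ereal) \<Rightarrow> ereal" where
  "rfs_integral v = enn2ereal (rfs_nn_integral (\<lambda>X. e2ennreal (v X)))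
                  - enn2ereal (rfs_nn_integral (\<lambda>X. e2ennreal (- v X)))"

primrec multi_nn_integral :: "nat \<Rightarrow> ((nat \<Rightarrow> 'a::euclidean_space set) \<Rightarrow> ennreal) \<Rightarrow> ennreal" where
  "multi_nn_integral 0 v = v (\<lambda>_. {})"
| "multi_nn_integral (Suc N) v =
     multi_nn_integral N (\<lambda>Xs. rfs_nn_integral (\<lambda>Y. v (Xs(N := Y))))"

definition multi_integral :: "nat \<Rightarrow> ((nat \<Rightarrow> 'a::euclidean_space set) \<Rightarrow> ereal) \<Rightarrow> ereal" where
  "multi_integral N v = enn2ereal (multi_nn_integral N (\<lambda>Xs. e2ennreal (v Xs)))
                      - enn2ereal (multi_nn_integral N (\<lambda>Xs. e2ennreal (- v Xs)))"

definition xlogy :: "real \<Rightarrow> real \<Rightarrow> ereal" where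
  "xlogy p s = (if p = 0 then 0 else if s = 0 then -\<infinity> else ereal (p * ln s))"

definition kl_term :: "real \<Rightarrow> real \<Rightarrow> ereal" where
  "kl_term p q = (if p = 0 then 0 else if q = 0 then \<infinity> else ereal (p * ln (p / q)))"

definition argmax_on :: "'b set \<Rightarrow> ('b \<Rightarrow> ereal) \<Rightarrow> 'b set" where
  "argmax_on S F = {x\<in>S. \<forall>y\<in>S. F y \<le> F x}"

definition argmin_on :: "'b set \<Rightarrow> ('b \<Rightarrow> ereal) \<Rightarrow> 'b set" where
  "argmin_on S F = {x\<in>S. \<forall>y\<in>S. F x \<le> F y}"

end

theory Submission
  imports Defs
begin

text \<open>
  Both objectives are computed level by level: the set integrals over the \<open>n\<close>-point
  configurations are rewritten as Lebesgue integrals over \<open>n\<close> labelled points, almost all of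
  which are distinct. On distinct points a Bernoulli component carries at most one point, so
  every configuration that contributes is described by an injection of the \<open>n\<close> points into the
  \<open>N\<close> components. Summing the labelled objective over the \<open>N!\<close> permutations of the
  candidate components recovers \<open>(N - n)!\<close> copies of the multi-Bernoulli density \<open>g\<close>, and
  averaging over the association hypotheses recovers the mixture \<open>f\<close>. Hence
  \<open>\<Sum>\<^sub>a w\<^sub>a \<integral>\<cdots>\<integral> f\<^sub>a log (\<Sum>\<^sub>\<pi> \<Prod> g\<^sub>\<pi>) = \<integral> f log g + C\<close> with
  \<open>C = \<Sum>\<^sub>n (1/n!) log (N - n)! \<integral> f\<^sub>n\<close>, and \<open>KL(f \<parallel> g) = \<integral> f log f - \<integral> f log g\<close>, where
  neither constant depends on \<open>g\<close>. All three problems therefore have the same maximisers.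
  To avoid \<open>\<infinity> - \<infinity>\<close>, every identity is established between positive and negative parts in
  \<open>ennreal\<close>; finiteness of the entropy of \<open>f\<close> makes the relevant parts finite.
\<close>

subsection \<open>Product measures\<close>

lemma product_sigma_finite_const: "sigma_finite_measure M \<Longrightarrow> product_sigma_finite (\<lambda>_. M)"
  by (simp add: product_sigma_finite_def)

lemma distr_PiM_bij_reindex:
  assumes M: "sigma_finite_measure M" and bij: "bij_betw t J I" and fin: "finite I"
  shows "distr (PiM I (\<lambda>_. M)) (PiM J (\<lambda>_. M)) (\<lambda>x. \<lambda>j\<in>J. x (t j))
      = PiM J (\<lambda>_. M)"
proof -
  have finJ: "finite J" using bij fin bij_betw_finite by blast
  have tJ: "t j \<in> I" if "j \<in> J" for j using bij that by (auto simp: bij_betw_def)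
  have meas: "(\<lambda>x. \<lambda>j\<in>J. x (t j)) \<in> measurable (PiM I (\<lambda>_. M)) (PiM J (\<lambda>_. M))"
    by (rule measurable_restrict) (use tJ in \<open>auto intro: measurable_component_singleton\<close>)
  show ?thesis
  proof (rule product_sigma_finite.PiM_eqI[OF product_sigma_finite_const[OF M] finJ])
    show "sets (distr (PiM I (\<lambda>_. M)) (PiM J (\<lambda>_. M)) (\<lambda>x. \<lambda>j\<in>J. x (t j))) = sets (PiM J (\<lambda>_. M))"
      by simp
    fix A assume A: "\<And>j. j \<in> J \<Longrightarrow> A j \<in> sets M"
    let ?s = "inv_into J t"
    have sI: "?s i \<in> J" if "i \<in> I" for i using bij that by (metis bij_betw_def inv_into_into)
    have ts: "t (?s i) = i" if "i \<in> I" for i using bij that by (metis bij_betw_def f_inv_into_f)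
    have st: "?s (t j) = j" if "j \<in> J" for j using bij that by (metis bij_betw_def inv_into_f_f)
    have pre: "(\<lambda>x. \<lambda>j\<in>J. x (t j)) -` (Pi\<^sub>E J A) \<inter> space (PiM I (\<lambda>_. M)) = Pi\<^sub>E I (\<lambda>i. A (?s i))"
    proof (intro set_eqI iffI)
      fix x assume "x \<in> (\<lambda>x. \<lambda>j\<in>J. x (t j)) -` (Pi\<^sub>E J A) \<inter> space (PiM I (\<lambda>_. M))"
      then have x0: "(\<lambda>j\<in>J. x (t j)) \<in> Pi\<^sub>E J A" "x \<in> extensional I"
        by (auto simp: space_PiM PiE_def)
      have x: "\<And>j. j \<in> J \<Longrightarrow> x (t j) \<in> A j"
      proof -
        fix j assume "j \<in> J"
        then show "x (t j) \<in> A j" using x0(1) PiE_mem[OF x0(1)] by (metis restrict_apply')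
      qed
      show "x \<in> Pi\<^sub>E I (\<lambda>i. A (?s i))"
      proof (unfold PiE_iff, intro conjI ballI)
        fix i assume i: "i \<in> I"
        show "x i \<in> A (?s i)" using x[OF sI[OF i]] ts[OF i] by simp
      qed (rule x0(2))
    next
      fix x assume x: "x \<in> Pi\<^sub>E I (\<lambda>i. A (?s i))"
      then have "x (t j) \<in> A j" if "j \<in> J" for j using PiE_mem[OF x tJ[OF that]] st[OF that] by simp
      then show "x \<in> (\<lambda>x. \<lambda>j\<in>J. x (t j)) -` (Pi\<^sub>E J A) \<inter> space (PiM I (\<lambda>_. M))"
        using x sI sets.sets_into_space[OF A] by (fastforce simp: space_PiM PiE_def Pi_iff)
    qed
    have "emeasure (distr (PiM I (\<lambda>_. M)) (PiM J (\<lambda>_. M)) (\<lambda>x. \<lambda>j\<in>J. x (t j))) (Pi\<^sub>E J A)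
        = emeasure (PiM I (\<lambda>_. M)) (Pi\<^sub>E I (\<lambda>i. A (?s i)))"
      using A by (subst emeasure_distr[OF meas]) (auto simp: pre intro!: sets_PiM_I_finite finJ)
    also have "\<dots> = (\<Prod>i\<in>I. emeasure M (A (?s i)))"
      using A sI by (intro product_sigma_finite.emeasure_PiM[OF product_sigma_finite_const[OF M] fin]) auto
    also have "\<dots> = (\<Prod>j\<in>J. emeasure M (A j))"
      using prod.reindex_bij_betw[OF bij, of "\<lambda>i. emeasure M (A (?s i))"] st by simp
    finally show "emeasure (distr (PiM I (\<lambda>_. M)) (PiM J (\<lambda>_. M)) (\<lambda>x. \<lambda>j\<in>J. x (t j))) (Pi\<^sub>E J A)
        = (\<Prod>j\<in>J. emeasure M (A j))" .
  qed
qed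

lemma nn_integral_PiM_bij_reindex:
  assumes M: "sigma_finite_measure M" and bij: "bij_betw t J I" and fin: "finite I"
    and h: "h \<in> borel_measurable (PiM J (\<lambda>_. M))"
  shows "(\<integral>\<^sup>+y. h y \<partial>PiM J (\<lambda>_. M)) = (\<integral>\<^sup>+x. h (\<lambda>j\<in>J. x (t j)) \<partial>PiM I (\<lambda>_. M))"
proof -
  have tJ: "t j \<in> I" if "j \<in> J" for j using bij that by (auto simp: bij_betw_def)
  have meas: "(\<lambda>x. \<lambda>j\<in>J. x (t j)) \<in> measurable (PiM I (\<lambda>_. M)) (PiM J (\<lambda>_. M))"
    by (rule measurable_restrict) (use tJ in \<open>auto intro: measurable_component_singleton\<close>)
  have "(\<integral>\<^sup>+y. h y \<partial>PiM J (\<lambda>_. M)) = (\<integral>\<^sup>+y. h y \<partial>distr (PiM I (\<lambda>_. M)) (PiM J (\<lambda>_. M)) (\<lambda>x. \<lambda>j\<in>J. x (t j)))"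
    by (subst distr_PiM_bij_reindex[OF M bij fin]) (rule refl)
  also have "\<dots> = (\<integral>\<^sup>+x. h (\<lambda>j\<in>J. x (t j)) \<partial>PiM I (\<lambda>_. M))"
    by (rule nn_integral_distr[OF meas]) (use h in simp)
  finally show ?thesis .
qed

abbreviation lborel_tuples :: "nat \<Rightarrow> (nat \<Rightarrow> 'a::euclidean_space) measure" where
  "lborel_tuples n \<equiv> PiM {..<n} (\<lambda>_. lborel)"

lemma product_sigma_finite_lborel:
  "product_sigma_finite (\<lambda>_::'i. lborel :: 'a::euclidean_space measure)"
  by (rule product_sigma_finite_const[OF sigma_finite_lborel])

lemma PiM_lborel_diagonal_null:
  assumes "i < (n::nat)" "j < n" "i \<noteq> j"
  shows "{xs \<in> space (lborel_tuples n :: (nat \<Rightarrow> 'a::euclidean_space) measure). xs i = xs j}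
           \<in> null_sets (lborel_tuples n)"
proof -
  let ?M = "lborel_tuples n :: (nat \<Rightarrow> 'a) measure"
  let ?D = "{xs \<in> space ?M. xs i = xs j}"
  have D: "?D \<in> sets ?M" by (rule measurable_equality_set) (use assms in auto)
  define I' where "I' = {..<n} - {i}"
  have ins: "insert i I' = {..<n}" "finite I'" "i \<notin> I'" using assms by (auto simp: I'_def)
  have "emeasure ?M ?D = (\<integral>\<^sup>+ xs. indicator ?D xs \<partial>?M)" using D by simp
  also have "\<dots> = (\<integral>\<^sup>+ x. (\<integral>\<^sup>+ y. indicator ?D (x(i := y)) \<partial>lborel) \<partial>PiM I' (\<lambda>_. lborel))"
    using product_sigma_finite.product_nn_integral_insert[OF product_sigma_finite_lborel,
        of I' i "indicator ?D"]
    unfolding ins(1) using ins(2,3) D by (simp add: borel_measurable_indicator)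
  also have "\<dots> = (\<integral>\<^sup>+ x. 0 \<partial>PiM I' (\<lambda>_. lborel::'a measure))"
  proof (rule nn_integral_cong)
    fix x
    have "AE y in lborel. indicator ?D (x(i := y)) = (0::ennreal)"
      using AE_lborel_singleton[of "x j"] by eventually_elim (use assms(3) in simp)
    then show "(\<integral>\<^sup>+ y. indicator ?D (x(i := y)) \<partial>lborel) = 0"
      using nn_integral_cong_AE by fastforce
  qed
  finally show ?thesis using D by (simp add: null_sets_def)
qed

lemma AE_PiM_lborel_inj_on:
  "AE xs in lborel_tuples (n::nat). inj_on xs {..<n}"
proof -
  have "AE xs in lborel_tuples n.
          \<forall>p\<in>{..<n}\<times>{..<n}. fst p \<noteq> snd p \<longrightarrow> xs (fst p) \<noteq> xs (snd p)"
  proof (subst AE_finite_all)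
    show "\<forall>p\<in>{..<n}\<times>{..<n}. AE xs in lborel_tuples n.
            fst p \<noteq> snd p \<longrightarrow> xs (fst p) \<noteq> xs (snd p)"
    proof
      fix p assume p: "p \<in> {..<n}\<times>{..<n}"
      show "AE xs in lborel_tuples n. fst p \<noteq> snd p \<longrightarrow> xs (fst p) \<noteq> xs (snd p)"
      proof (cases "fst p = snd p")
        case False
        show ?thesis
          by (rule AE_I'[OF PiM_lborel_diagonal_null[of "fst p" n "snd p"]]) (use p False in auto)
      qed simp
    qed
  qed simp
  then show ?thesis
    by eventually_elim (auto simp: inj_on_def)
qed

subsection \<open>Injections and permutations\<close>

lemma card_inj_extensional_funcset:
  assumes "finite S" "finite T" "card S \<le> card T"
  shows "card {f \<in> S \<rightarrow>\<^sub>E T. inj_on f S} * fact (card T - card S) = fact (card T)"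
  using assms
proof (induction S arbitrary: T rule: finite_induct)
  case empty
  then show ?case by (simp add: PiE_empty_domain Collect_conv_if)
next
  case (insert x S)
  let ?P = "{(y, g). y \<in> T \<and> g \<in> S \<rightarrow>\<^sub>E (T - {y}) \<and> inj_on g S}"
  have eq: "{f \<in> insert x S \<rightarrow>\<^sub>E T. inj_on f (insert x S)} = (\<lambda>(y, g). g(x:=y)) ` ?P"
    using extensional_funcset_extend_domain_inj_on_eq[OF insert(2), of T] by simp
  have "card {f \<in> insert x S \<rightarrow>\<^sub>E T. inj_on f (insert x S)} = card ?P"
    unfolding eq by (rule card_image[OF extensional_funcset_extend_domain_inj_onI[OF insert(2)]])
  also have "?P = (SIGMA y:T. {g \<in> S \<rightarrow>\<^sub>E (T - {y}). inj_on g S})" unfolding Sigma_def by blast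
  also have "card \<dots> = (\<Sum>y\<in>T. card {g \<in> S \<rightarrow>\<^sub>E (T - {y}). inj_on g S})"
  proof (rule card_SigmaI)
    show "finite T" by (rule insert.prems(1))
    show "\<forall>y\<in>T. finite {g \<in> S \<rightarrow>\<^sub>E (T - {y}). inj_on g S}"
    proof
      fix y
      have "finite (S \<rightarrow>\<^sub>E (T - {y}))" using insert.prems(1) insert.hyps(1) by (simp add: finite_PiE)
      then show "finite {g \<in> S \<rightarrow>\<^sub>E (T - {y}). inj_on g S}" by simp
    qed
  qed
  finally have c: "card {f \<in> insert x S \<rightarrow>\<^sub>E T. inj_on f (insert x S)}
      = (\<Sum>y\<in>T. card {g \<in> S \<rightarrow>\<^sub>E (T - {y}). inj_on g S})" .
  have cT: "card T \<ge> 1" "card S < card T" using insert.prems(2) insert.hyps by simp_all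
  have IH: "card {g \<in> S \<rightarrow>\<^sub>E (T - {y}). inj_on g S} * fact (card T - 1 - card S) = fact (card T - 1)"
    if "y \<in> T" for y
  proof -
    have "card (T - {y}) = card T - 1" using that insert.prems(1) by (simp add: card_Diff_singleton)
    moreover have "finite (T - {y})" using insert.prems(1) by simp
    moreover have "card S \<le> card (T - {y})" using cT calculation(1) by linarith
    ultimately show ?thesis using insert.IH[of "T - {y}"] by simp
  qed
  have "card {f \<in> insert x S \<rightarrow>\<^sub>E T. inj_on f (insert x S)} * fact (card T - card (insert x S))
      = (\<Sum>y\<in>T. card {g \<in> S \<rightarrow>\<^sub>E (T - {y}). inj_on g S} * fact (card T - 1 - card S))"
    unfolding c using insert.hyps by (simp add: sum_distrib_right)
  also have "\<dots> = (\<Sum>y\<in>T. fact (card T - 1))" by (rule sum.cong[OF refl]) (rule IH)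
  also have "\<dots> = card T * fact (card T - 1)" by simp
  also have "\<dots> = fact (card T)" using cT by (cases "card T") simp_all
  finally show ?case .
qed

lemma card_bij_extensional_funcset:
  assumes "finite S" "finite T" "card S = card T"
  shows "card {f \<in> S \<rightarrow>\<^sub>E T. inj_on f S} = fact (card T)"
  using card_inj_extensional_funcset[OF assms(1,2)] assms(3) by simp

definition injections :: "nat \<Rightarrow> nat \<Rightarrow> (nat \<Rightarrow> nat) set" where
  "injections n N = {\<iota> \<in> {..<n} \<rightarrow>\<^sub>E {..<N}. inj_on \<iota> {..<n}}"

lemma finite_injections[simp]: "finite (injections n N)"
  unfolding injections_def
  by (rule finite_subset[of _ "{..<n} \<rightarrow>\<^sub>E {..<N}"]) (auto intro: finite_PiE)

lemma injections_image_subset: "\<iota> \<in> injections n N \<Longrightarrow> \<iota> ` {..<n} \<subseteq> {..<N}"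
  by (auto simp: injections_def PiE_iff)

lemma injections_less: "\<iota> \<in> injections n N \<Longrightarrow> k < n \<Longrightarrow> \<iota> k < N"
  using injections_image_subset by blast

lemma injections_inj_on: "\<iota> \<in> injections n N \<Longrightarrow> inj_on \<iota> {..<n}"
  by (simp add: injections_def)

lemma card_image_injections: "\<iota> \<in> injections n N \<Longrightarrow> card (\<iota> ` {..<n}) = n"
  by (simp add: injections_inj_on card_image)

lemma injections_empty: "N < n \<Longrightarrow> injections n N = {}"
  using card_mono[OF finite_lessThan injections_image_subset]
  by (fastforce simp: card_image_injections)

lemma card_injections_onto:
  assumes S: "S \<subseteq> {..<N}" "card S = n"
  shows "card {\<iota> \<in> injections n N. \<iota> ` {..<n} = S} = fact n"
proof -
  have finS: "finite S" using S finite_subset by blast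
  have "{\<iota> \<in> injections n N. \<iota> ` {..<n} = S} = {f \<in> {..<n} \<rightarrow>\<^sub>E S. inj_on f {..<n}}"
  proof (intro set_eqI iffI)
    fix f assume f: "f \<in> {f \<in> {..<n} \<rightarrow>\<^sub>E S. inj_on f {..<n}}"
    then have "f ` {..<n} \<subseteq> S" "card (f ` {..<n}) = card S"
      using S by (auto simp: card_image PiE_iff)
    then have "f ` {..<n} = S" using finS by (simp add: card_subset_eq)
    then show "f \<in> {\<iota> \<in> injections n N. \<iota> ` {..<n} = S}"
      using f S(1) by (auto simp: injections_def PiE_iff)
  qed (auto simp: injections_def PiE_iff)
  then show ?thesis using card_bij_extensional_funcset[of "{..<n}" S] finS S by simp
qed

lemma restrict_comp_permutes_injections:
  assumes \<iota>: "\<iota> \<in> injections n N" and p: "\<pi> permutes {..<N}"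
  shows "restrict (\<pi> \<circ> \<iota>) {..<n} \<in> injections n N"
proof -
  have "inj_on (\<pi> \<circ> \<iota>) {..<n}"
    using injections_inj_on[OF \<iota>] permutes_inj[OF p] by (auto intro: comp_inj_on inj_on_subset)
  moreover have "(\<pi> \<circ> \<iota>) k < N" if "k < n" for k
    using permutes_in_image[OF p] injections_less[OF \<iota> that] by simp
  ultimately show ?thesis
    by (auto simp: injections_def PiE_iff inj_on_def)
qed

lemma permutes_fiber_apply:
  assumes "restrict (\<pi> \<circ> \<iota>) {..<n} = \<tau>" "k < n"
  shows "\<pi> (\<iota> k) = \<tau> k"
  using fun_cong[OF assms(1), of k] assms(2) by simp

lemma restrict_permutes_fiber_inj_on:
  "inj_on (\<lambda>\<pi>. restrict \<pi> ({..<N} - \<iota> ` {..<n}))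
     {\<pi>. \<pi> permutes {..<N} \<and> restrict (\<pi> \<circ> \<iota>) {..<n} = \<tau>}"
proof (rule inj_onI)
  fix \<pi> \<pi>' assume "\<pi> \<in> {\<pi>. \<pi> permutes {..<N} \<and> restrict (\<pi> \<circ> \<iota>) {..<n} = \<tau>}"
    and "\<pi>' \<in> {\<pi>. \<pi> permutes {..<N} \<and> restrict (\<pi> \<circ> \<iota>) {..<n} = \<tau>}"
    and eq: "restrict \<pi> ({..<N} - \<iota> ` {..<n}) = restrict \<pi>' ({..<N} - \<iota> ` {..<n})"
  then have p: "\<pi> permutes {..<N}" "restrict (\<pi> \<circ> \<iota>) {..<n} = \<tau>"
    and p': "\<pi>' permutes {..<N}" "restrict (\<pi>' \<circ> \<iota>) {..<n} = \<tau>" by auto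
  show "\<pi> = \<pi>'"
  proof
    fix x
    consider "x \<in> {..<N} - \<iota> ` {..<n}" | k where "k < n" "x = \<iota> k" | "x \<notin> {..<N}" by blast
    then show "\<pi> x = \<pi>' x"
    proof cases
      case 1 then show ?thesis using eq by (metis restrict_apply')
    next
      case 2 then show ?thesis using permutes_fiber_apply[OF p(2)] permutes_fiber_apply[OF p'(2)] by simp
    next
      case 3 then show ?thesis using p(1) p'(1) by (simp add: permutes_not_in)
    qed
  qed
qed

lemma restrict_permutes_fiber_bij:
  assumes \<iota>: "\<iota> \<in> injections n N" and p: "\<pi> permutes {..<N}"
    and fib: "restrict (\<pi> \<circ> \<iota>) {..<n} = \<tau>"
  shows "restrict \<pi> ({..<N} - \<iota> ` {..<n}) \<in>
           {h \<in> ({..<N} - \<iota> ` {..<n}) \<rightarrow>\<^sub>E ({..<N} - \<tau> ` {..<n}). inj_on h ({..<N} - \<iota> ` {..<n})}"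
proof -
  have "\<pi> x \<in> {..<N} - \<tau> ` {..<n}" if x: "x \<in> {..<N} - \<iota> ` {..<n}" for x
  proof -
    have "\<pi> x \<noteq> \<pi> (\<iota> k)" if "k < n" for k
      using x that permutes_inj[OF p] by (auto simp: inj_eq)
    then have "\<pi> x \<notin> \<tau> ` {..<n}" using fib permutes_fiber_apply by fastforce
    moreover have "\<pi> x < N" using x permutes_in_image[OF p] by simp
    ultimately show ?thesis by simp
  qed
  moreover have "inj_on \<pi> ({..<N} - \<iota> ` {..<n})"
    using permutes_inj[OF p] by (meson inj_on_subset subset_UNIV)
  ultimately show ?thesis by (auto simp: PiE_iff inj_on_def)
qed

text \<open>A bijection between the complements of the two images glues with \<open>\<tau> \<circ> \<iota>\<inverse>\<close> to a permutation.\<close>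

lemma permutes_fiber_extend:
  assumes \<iota>: "\<iota> \<in> injections n N" and \<tau>: "\<tau> \<in> injections n N"
    and h: "h \<in> {h \<in> ({..<N} - \<iota> ` {..<n}) \<rightarrow>\<^sub>E ({..<N} - \<tau> ` {..<n}). inj_on h ({..<N} - \<iota> ` {..<n})}"
  obtains \<pi> where "\<pi> permutes {..<N}" "restrict (\<pi> \<circ> \<iota>) {..<n} = \<tau>"
    "restrict \<pi> ({..<N} - \<iota> ` {..<n}) = h"
proof -
  let ?C = "{..<N} - \<iota> ` {..<n}" and ?D = "{..<N} - \<tau> ` {..<n}"
  have hD: "h ` ?C \<subseteq> ?D" and hinj: "inj_on h ?C" and hext: "h \<in> extensional ?C"
    using h by (auto simp: PiE_iff)
  have "card ?C = card ?D"
    using injections_image_subset[OF \<iota>] injections_image_subset[OF \<tau>]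
    by (simp add: card_Diff_subset card_image_injections[OF \<iota>] card_image_injections[OF \<tau>])
  then have hCD: "h ` ?C = ?D"
    using hD hinj by (simp add: card_image card_subset_eq)
  define \<pi> where "\<pi> x = (if x \<in> ?C then h x
      else if x \<in> \<iota> ` {..<n} then \<tau> (inv_into {..<n} \<iota> x) else x)" for x
  have \<pi>\<iota>: "\<pi> (\<iota> k) = \<tau> k" if "k < n" for k
    using that injections_inj_on[OF \<iota>] by (simp add: \<pi>_def inv_into_f_f)
  have "\<pi> ` ?C = ?D" using hCD by (simp add: \<pi>_def)
  moreover have "\<pi> ` \<iota> ` {..<n} = \<tau> ` {..<n}" using \<pi>\<iota> by (force simp: image_image)
  moreover have "{..<N} = ?C \<union> \<iota> ` {..<n}" "{..<N} = ?D \<union> \<tau> ` {..<n}"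
    using injections_image_subset[OF \<iota>] injections_image_subset[OF \<tau>] by auto
  ultimately have img: "\<pi> ` {..<N} = {..<N}" by (metis image_Un)
  have "\<pi> permutes {..<N}"
  proof (rule bij_imp_permutes)
    show "bij_betw \<pi> {..<N} {..<N}"
      using img eq_card_imp_inj_on[of "{..<N}" \<pi>] by (simp add: bij_betw_def)
    show "\<pi> x = x" if "x \<notin> {..<N}" for x
      using that injections_less[OF \<iota>] by (auto simp: \<pi>_def)
  qed
  moreover have "restrict (\<pi> \<circ> \<iota>) {..<n} = \<tau>"
    using \<pi>\<iota> \<tau> by (intro extensionalityI[of _ "{..<n}"]) (auto simp: injections_def PiE_def)
  moreover have "restrict \<pi> ?C = h"
    by (rule extensionalityI[OF _ hext]) (auto simp: \<pi>_def)
  ultimately show ?thesis by (rule that)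
qed

lemma card_permutes_fiber:
  assumes \<iota>: "\<iota> \<in> injections n N" and \<tau>: "\<tau> \<in> injections n N"
  shows "card {\<pi>. \<pi> permutes {..<N} \<and> restrict (\<pi> \<circ> \<iota>) {..<n} = \<tau>} = fact (N - n)"
proof -
  let ?C = "{..<N} - \<iota> ` {..<n}" and ?D = "{..<N} - \<tau> ` {..<n}"
  let ?F = "{\<pi>. \<pi> permutes {..<N} \<and> restrict (\<pi> \<circ> \<iota>) {..<n} = \<tau>}"
  have "bij_betw (\<lambda>\<pi>. restrict \<pi> ?C) ?F {h \<in> ?C \<rightarrow>\<^sub>E ?D. inj_on h ?C}"
    unfolding bij_betw_def
  proof (intro conjI restrict_permutes_fiber_inj_on set_eqI iffI)
    fix h assume "h \<in> (\<lambda>\<pi>. restrict \<pi> ?C) ` ?F"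
    then show "h \<in> {h \<in> ?C \<rightarrow>\<^sub>E ?D. inj_on h ?C}"
      using restrict_permutes_fiber_bij[OF \<iota>] by blast
  next
    fix h assume "h \<in> {h \<in> ?C \<rightarrow>\<^sub>E ?D. inj_on h ?C}"
    then obtain \<pi> where "\<pi> permutes {..<N}" "restrict (\<pi> \<circ> \<iota>) {..<n} = \<tau>" "restrict \<pi> ?C = h"
      by (rule permutes_fiber_extend[OF \<iota> \<tau>])
    then show "h \<in> (\<lambda>\<pi>. restrict \<pi> ?C) ` ?F" by blast
  qed
  then have "card ?F = card {h \<in> ?C \<rightarrow>\<^sub>E ?D. inj_on h ?C}" by (rule bij_betw_same_card)
  also have "\<dots> = fact (N - n)"
    using injections_image_subset[OF \<iota>] injections_image_subset[OF \<tau>]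
    by (subst card_bij_extensional_funcset)
       (simp_all add: card_Diff_subset card_image_injections[OF \<iota>] card_image_injections[OF \<tau>])
  finally show ?thesis .
qed

subsection \<open>Set integrals of functions supported on singletons\<close>

definition singletons_on :: "nat set \<Rightarrow> (nat \<Rightarrow> 'a) \<Rightarrow> nat \<Rightarrow> 'a set" where
  "singletons_on S x = (\<lambda>i. if i \<in> S then {x i} else {})"

lemma singletons_on_empty: "singletons_on {} x = (\<lambda>_. {})"
  by (auto simp: singletons_on_def)

lemma singletons_on_upd_empty: "N \<notin> S \<Longrightarrow> (singletons_on S x)(N := {}) = singletons_on S x"
  by (rule ext) (auto simp: singletons_on_def)

lemma singletons_on_upd_singleton:
  "(singletons_on S x)(N := {y}) = singletons_on (insert N S) (x(N := y))"
  by (rule ext) (auto simp: singletons_on_def)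

lemma rfs_nn_integral_zero: "rfs_nn_integral (\<lambda>_. 0) = 0"
  by (simp add: rfs_nn_integral_def)

lemma rfs_nn_integral_AE_eq_finite_sum:
  fixes u :: "'a::euclidean_space set \<Rightarrow> ennreal"
  assumes rep: "\<And>n. AE xs in lborel_tuples n. u (xs ` {..<n}) = U n xs"
    and zero: "\<And>n xs. N < n \<Longrightarrow> U n xs = 0"
  shows "rfs_nn_integral u
           = (\<Sum>n\<in>{..N}. ennreal (1 / fact n) * (\<integral>\<^sup>+xs. U n xs \<partial>lborel_tuples n))"
proof -
  have "rfs_nn_integral u
      = (\<Sum>n. ennreal (1 / fact n) * (\<integral>\<^sup>+xs. U n xs \<partial>lborel_tuples n))"
    unfolding rfs_nn_integral_def using nn_integral_cong_AE[OF rep] by simp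
  also have "\<dots> = (\<Sum>n\<in>{..N}. ennreal (1 / fact n) * (\<integral>\<^sup>+xs. U n xs \<partial>lborel_tuples n))"
    by (rule suminf_finite) (auto simp: zero not_le)
  finally show ?thesis .
qed

text \<open>Configurations with two or more points are hit only on the null set of non-injective tuples.\<close>

lemma rfs_nn_integral_at_most_singletons:
  fixes w :: "'a::euclidean_space set \<Rightarrow> ennreal"
  assumes zero: "\<And>Y. finite Y \<Longrightarrow> 2 \<le> card Y \<Longrightarrow> w Y = 0"
    and meas: "(\<lambda>y. w {y}) \<in> borel_measurable lborel"
  shows "rfs_nn_integral w = w {} + (\<integral>\<^sup>+y. w {y} \<partial>lborel)"
proof -
  let ?t = "\<lambda>n::nat. ennreal (1 / fact n) *
       (\<integral>\<^sup>+ xs. w (xs ` {..<n}) \<partial>(lborel_tuples n))"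
  have t0: "?t n = 0" if n: "n \<notin> {..<2}" for n
  proof -
    have "AE xs in lborel_tuples n. w (xs ` {..<n}) = 0"
      using AE_PiM_lborel_inj_on[of n]
      by eventually_elim (use n in \<open>auto intro!: zero simp: card_image\<close>)
    then have "(\<integral>\<^sup>+ xs. w (xs ` {..<n}) \<partial>(lborel_tuples n)) = 0"
      using nn_integral_cong_AE by fastforce
    then show ?thesis by simp
  qed
  have "rfs_nn_integral w = (\<Sum>n<2. ?t n)"
    unfolding rfs_nn_integral_def by (rule suminf_finite) (use t0 in auto)
  also have "\<dots> = ?t 0 + ?t 1" by (simp add: numeral_2_eq_2)
  also have "?t 0 = w {}"
    using product_sigma_finite.nn_integral_empty[OF product_sigma_finite_lborel, of "\<lambda>xs. w (xs ` {})"]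
    by simp
  also have "?t 1 = (\<integral>\<^sup>+ xs. w {xs 0} \<partial>(PiM {0::nat} (\<lambda>_. lborel::'a measure)))"
    by (simp add: lessThan_Suc)
  also have "\<dots> = (\<integral>\<^sup>+y. w {y} \<partial>lborel)"
    by (rule product_sigma_finite.product_nn_integral_singleton[OF product_sigma_finite_lborel])
       (use meas in simp)
  finally show ?thesis .
qed

lemma rfs_nn_integral_singletons_on_upd:
  fixes v :: "(nat \<Rightarrow> 'a::euclidean_space set) \<Rightarrow> ennreal"
  assumes zero: "\<And>Xs. finite (Xs N) \<Longrightarrow> 2 \<le> card (Xs N) \<Longrightarrow> v Xs = 0"
    and meas: "(\<lambda>x. v (singletons_on (insert N S) x)) \<in> borel_measurable (PiM (insert N S) (\<lambda>_. lborel))"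
    and NS: "N \<notin> S" and x: "x \<in> space (PiM S (\<lambda>_. lborel::'a measure))"
  shows "rfs_nn_integral (\<lambda>Y. v ((singletons_on S x)(N := Y)))
           = v (singletons_on S x) + (\<integral>\<^sup>+y. v (singletons_on (insert N S) (x(N := y))) \<partial>lborel)"
proof -
  have "(\<lambda>y. v (singletons_on (insert N S) (x(N := y)))) \<in> borel_measurable lborel"
    using measurable_comp[OF measurable_component_update[OF x NS] meas] by (simp add: comp_def)
  then have "rfs_nn_integral (\<lambda>Y. v ((singletons_on S x)(N := Y)))
      = v ((singletons_on S x)(N := {})) + (\<integral>\<^sup>+y. v ((singletons_on S x)(N := {y})) \<partial>lborel)"
    by (intro rfs_nn_integral_at_most_singletons) (auto intro: zero simp: singletons_on_upd_singleton)
  then show ?thesis by (simp add: singletons_on_upd_empty[OF NS] singletons_on_upd_singleton)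
qed

lemma borel_measurable_nn_integral_singletons_on_insert:
  fixes v :: "(nat \<Rightarrow> 'a::euclidean_space set) \<Rightarrow> ennreal"
  assumes meas: "(\<lambda>x. v (singletons_on (insert N S) x)) \<in> borel_measurable (PiM (insert N S) (\<lambda>_. lborel))"
  shows "(\<lambda>x. \<integral>\<^sup>+y. v (singletons_on (insert N S) (x(N := y))) \<partial>lborel)
           \<in> borel_measurable (PiM S (\<lambda>_. lborel::'a measure))"
proof (rule lborel.borel_measurable_nn_integral)
  have "(\<lambda>(x, y). x(N := y))
          \<in> measurable (PiM S (\<lambda>_. lborel::'a measure) \<Otimes>\<^sub>M lborel) (PiM (insert N S) (\<lambda>_. lborel))"
    using measurable_add_dim[of N S "\<lambda>_. lborel::'a measure"] by simp
  from measurable_comp[OF this meas]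
  show "(\<lambda>(x, y). v (singletons_on (insert N S) (x(N := y))))
          \<in> borel_measurable (PiM S (\<lambda>_. lborel) \<Otimes>\<^sub>M lborel)"
    by (auto simp: comp_def case_prod_beta')
qed

lemma multi_nn_integral_singletons_on:
  fixes v :: "(nat \<Rightarrow> 'a::euclidean_space set) \<Rightarrow> ennreal"
  assumes "\<And>Xs. (\<exists>i<N. finite (Xs i) \<and> 2 \<le> card (Xs i)) \<Longrightarrow> v Xs = 0"
    and "\<And>S. S \<subseteq> {..<N} \<Longrightarrow> (\<lambda>x. v (singletons_on S x)) \<in> borel_measurable (PiM S (\<lambda>_. lborel))"
  shows "multi_nn_integral N v
           = (\<Sum>S\<in>Pow {..<N}. \<integral>\<^sup>+x. v (singletons_on S x) \<partial>PiM S (\<lambda>_. lborel))"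
  using assms
proof (induction N arbitrary: v)
  case 0
  then show ?case
    using product_sigma_finite.nn_integral_empty[OF product_sigma_finite_lborel,
        of "\<lambda>x. v (singletons_on {} x)"]
    by (simp add: singletons_on_empty)
next
  case (Suc N)
  note zero = Suc.prems(1) and meas = Suc.prems(2)
  have measI: "(\<lambda>x. v (singletons_on (insert N S) x)) \<in> borel_measurable (PiM (insert N S) (\<lambda>_. lborel))"
    and measS: "(\<lambda>x. v (singletons_on S x)) \<in> borel_measurable (PiM S (\<lambda>_. lborel))"
    if "S \<subseteq> {..<N}" for S
    using that by (auto intro!: meas)
  define u where "u Xs = rfs_nn_integral (\<lambda>Y. v (Xs(N := Y)))" for Xs :: "nat \<Rightarrow> 'a set"
  have u_singletons: "u (singletons_on S x)
      = v (singletons_on S x) + (\<integral>\<^sup>+y. v (singletons_on (insert N S) (x(N := y))) \<partial>lborel)"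
    if "S \<subseteq> {..<N}" "x \<in> space (PiM S (\<lambda>_. lborel::'a measure))" for S x
    unfolding u_def using that measI
    by (intro rfs_nn_integral_singletons_on_upd) (auto intro: zero)
  have IH: "multi_nn_integral N u = (\<Sum>S\<in>Pow {..<N}. \<integral>\<^sup>+x. u (singletons_on S x) \<partial>PiM S (\<lambda>_. lborel))"
  proof (rule Suc.IH)
    show "u Xs = 0" if "\<exists>i<N. finite (Xs i) \<and> 2 \<le> card (Xs i)" for Xs
    proof -
      have "v (Xs(N := Y)) = 0" for Y
        using that by (intro zero) auto
      then show ?thesis by (simp add: u_def rfs_nn_integral_zero)
    qed
    show "(\<lambda>x. u (singletons_on S x)) \<in> borel_measurable (PiM S (\<lambda>_. lborel))" if "S \<subseteq> {..<N}" for S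
      using borel_measurable_add[OF measS[OF that]
          borel_measurable_nn_integral_singletons_on_insert[OF measI[OF that]]]
      by (rule measurable_cong[THEN iffD1, rotated]) (use u_singletons[OF that] in simp)
  qed
  have step: "(\<integral>\<^sup>+x. u (singletons_on S x) \<partial>PiM S (\<lambda>_. lborel))
      = (\<integral>\<^sup>+x. v (singletons_on S x) \<partial>PiM S (\<lambda>_. lborel))
        + (\<integral>\<^sup>+x. v (singletons_on (insert N S) x) \<partial>PiM (insert N S) (\<lambda>_. lborel::'a measure))"
    if S: "S \<subseteq> {..<N}" for S
  proof -
    have "(\<integral>\<^sup>+x. u (singletons_on S x) \<partial>PiM S (\<lambda>_. lborel)) =
        (\<integral>\<^sup>+x. v (singletons_on S x) + (\<integral>\<^sup>+y. v (singletons_on (insert N S) (x(N := y))) \<partial>lborel)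
          \<partial>PiM S (\<lambda>_. lborel::'a measure))"
      by (rule nn_integral_cong) (use u_singletons[OF S] in simp)
    also have "\<dots> = (\<integral>\<^sup>+x. v (singletons_on S x) \<partial>PiM S (\<lambda>_. lborel)) +
        (\<integral>\<^sup>+x. (\<integral>\<^sup>+y. v (singletons_on (insert N S) (x(N := y))) \<partial>lborel) \<partial>PiM S (\<lambda>_. lborel::'a measure))"
      by (rule nn_integral_add)
         (use measS[OF S] borel_measurable_nn_integral_singletons_on_insert[OF measI[OF S]] in auto)
    also have "(\<integral>\<^sup>+x. (\<integral>\<^sup>+y. v (singletons_on (insert N S) (x(N := y))) \<partial>lborel) \<partial>PiM S (\<lambda>_. lborel::'a measure))
        = (\<integral>\<^sup>+x. v (singletons_on (insert N S) x) \<partial>PiM (insert N S) (\<lambda>_. lborel::'a measure))"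
      using S finite_subset measI[OF S]
      by (intro product_sigma_finite.product_nn_integral_insert[OF product_sigma_finite_lborel, symmetric])
         auto
    finally show ?thesis .
  qed
  have injI: "inj_on (insert N) (Pow {..<N})"
    by (rule inj_onI) (metis Pow_iff insert_ident lessThan_iff order_less_irrefl subsetD)
  have "multi_nn_integral (Suc N) v = (\<Sum>S\<in>Pow {..<N}. \<integral>\<^sup>+x. u (singletons_on S x) \<partial>PiM S (\<lambda>_. lborel))"
    using IH by (simp add: u_def[abs_def])
  also have "\<dots> = (\<Sum>S\<in>Pow {..<N}. \<integral>\<^sup>+x. v (singletons_on S x) \<partial>PiM S (\<lambda>_. lborel))
      + (\<Sum>S\<in>insert N ` Pow {..<N}. \<integral>\<^sup>+x. v (singletons_on S x) \<partial>PiM S (\<lambda>_. lborel::'a measure))"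
    by (simp add: step sum.distrib sum.reindex[OF injI])
  also have "\<dots> = (\<Sum>S\<in>Pow {..<Suc N}. \<integral>\<^sup>+x. v (singletons_on S x) \<partial>PiM S (\<lambda>_. lborel))"
    unfolding lessThan_Suc Pow_insert by (rule sum.union_disjoint[symmetric]) auto
  finally show ?case .
qed

definition scatter :: "(nat \<Rightarrow> nat) \<Rightarrow> nat \<Rightarrow> (nat \<Rightarrow> 'a) \<Rightarrow> nat \<Rightarrow> 'a set" where
  "scatter \<iota> n xs = (\<lambda>i. if i \<in> \<iota> ` {..<n} then {xs (inv_into {..<n} \<iota> i)} else {})"

lemma singletons_on_restrict_inv_into:
  "singletons_on (\<iota> ` {..<n}) (\<lambda>j\<in>\<iota> ` {..<n}. xs (inv_into {..<n} \<iota> j)) = scatter \<iota> n xs"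
  by (rule ext) (simp add: singletons_on_def scatter_def)

lemma nn_integral_scatter:
  fixes v :: "(nat \<Rightarrow> 'a::euclidean_space set) \<Rightarrow> ennreal"
  assumes \<iota>: "\<iota> \<in> injections n N"
    and meas: "(\<lambda>x. v (singletons_on (\<iota> ` {..<n}) x)) \<in> borel_measurable (PiM (\<iota> ` {..<n}) (\<lambda>_. lborel))"
  shows "(\<integral>\<^sup>+xs. v (scatter \<iota> n xs) \<partial>lborel_tuples n)
           = (\<integral>\<^sup>+x. v (singletons_on (\<iota> ` {..<n}) x) \<partial>PiM (\<iota> ` {..<n}) (\<lambda>_. lborel::'a measure))"
proof -
  have "bij_betw \<iota> {..<n} (\<iota> ` {..<n})"
    using injections_inj_on[OF \<iota>] by (simp add: bij_betw_def)
  then have "bij_betw (inv_into {..<n} \<iota>) (\<iota> ` {..<n}) {..<n}" by (rule bij_betw_inv_into)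
  from nn_integral_PiM_bij_reindex[OF sigma_finite_lborel this finite_lessThan meas]
  show ?thesis by (simp add: singletons_on_restrict_inv_into)
qed

text \<open>
  Each \<open>n\<close>-subset of the slots is the image of \<open>n!\<close> injections, which cancels the \<open>1/n!\<close>
  of the set integral.
\<close>

lemma multi_nn_integral_scatter:
  fixes v :: "(nat \<Rightarrow> 'a::euclidean_space set) \<Rightarrow> ennreal"
  assumes zero: "\<And>Xs. (\<exists>i<N. finite (Xs i) \<and> 2 \<le> card (Xs i)) \<Longrightarrow> v Xs = 0"
    and meas: "\<And>S. S \<subseteq> {..<N} \<Longrightarrow> (\<lambda>x. v (singletons_on S x)) \<in> borel_measurable (PiM S (\<lambda>_. lborel))"
  shows "multi_nn_integral N v = (\<Sum>n\<in>{..N}. ennreal (1 / fact n) *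
            (\<Sum>\<iota>\<in>injections n N. \<integral>\<^sup>+xs. v (scatter \<iota> n xs) \<partial>lborel_tuples n))"
proof -
  define R where "R S = (\<integral>\<^sup>+x. v (singletons_on S x) \<partial>PiM S (\<lambda>_. lborel::'a measure))" for S
  have level: "ennreal (1 / fact n) * (\<Sum>\<iota>\<in>injections n N. \<integral>\<^sup>+xs. v (scatter \<iota> n xs) \<partial>lborel_tuples n)
      = (\<Sum>S\<in>{S\<in>Pow {..<N}. card S = n}. R S)" for n
  proof -
    have img: "(\<lambda>\<iota>. \<iota> ` {..<n}) ` injections n N \<subseteq> {S\<in>Pow {..<N}. card S = n}"
      using injections_image_subset card_image_injections by blast
    have "(\<Sum>\<iota>\<in>injections n N. \<integral>\<^sup>+xs. v (scatter \<iota> n xs) \<partial>lborel_tuples n)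
        = (\<Sum>\<iota>\<in>injections n N. R (\<iota> ` {..<n}))"
      unfolding R_def using injections_image_subset
      by (intro sum.cong refl nn_integral_scatter meas) auto
    also have "\<dots> = (\<Sum>S\<in>{S\<in>Pow {..<N}. card S = n}.
                        \<Sum>\<iota>\<in>{\<iota> \<in> injections n N. \<iota> ` {..<n} = S}. R (\<iota> ` {..<n}))"
      by (rule sum.group[symmetric]) (use img in auto)
    also have "\<dots> = (\<Sum>S\<in>{S\<in>Pow {..<N}. card S = n}. of_nat (fact n) * R S)"
    proof (rule sum.cong[OF refl])
      fix S assume S: "S \<in> {S\<in>Pow {..<N}. card S = n}"
      have "(\<Sum>\<iota>\<in>{\<iota> \<in> injections n N. \<iota> ` {..<n} = S}. R (\<iota> ` {..<n}))
          = (\<Sum>\<iota>\<in>{\<iota> \<in> injections n N. \<iota> ` {..<n} = S}. R S)"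
        by (rule sum.cong) auto
      then show "(\<Sum>\<iota>\<in>{\<iota> \<in> injections n N. \<iota> ` {..<n} = S}. R (\<iota> ` {..<n})) = of_nat (fact n) * R S"
        using S by (simp add: card_injections_onto)
    qed
    finally show ?thesis
      by (simp add: sum_distrib_left mult.assoc[symmetric] ennreal_of_nat_eq_real_of_nat
          ennreal_mult[symmetric])
  qed
  have "multi_nn_integral N v = (\<Sum>S\<in>Pow {..<N}. R S)"
    unfolding R_def by (rule multi_nn_integral_singletons_on[OF zero meas]) auto
  also have "\<dots> = (\<Sum>n\<in>{..N}. \<Sum>S\<in>{S\<in>Pow {..<N}. card S = n}. R S)"
    by (rule sum.group[symmetric]) (auto intro: card_mono[of "{..<N}", THEN le_trans])
  finally show ?thesis by (simp add: level)
qed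

subsection \<open>Sums over partitions of distinct points\<close>

definition cells :: "nat \<Rightarrow> nat \<Rightarrow> (nat \<Rightarrow> 'a) \<Rightarrow> (nat \<Rightarrow> nat) \<Rightarrow> nat \<Rightarrow> 'a set" where
  "cells N n xs \<iota> = (\<lambda>i. if i < N then xs ` {k\<in>{..<n}. \<iota> k = i} else {})"

lemma cells_in_disjoint_tuples:
  assumes inj: "inj_on xs {..<n}" and \<iota>: "\<iota> \<in> {..<n} \<rightarrow>\<^sub>E {..<N}"
  shows "cells N n xs \<iota> \<in> disjoint_tuples N (xs ` {..<n})"
proof -
  have "(\<Union>i<N. xs ` {k\<in>{..<n}. \<iota> k = i}) = xs ` {..<n}"
    using \<iota> by (auto simp: PiE_iff)
  moreover have "xs ` {k\<in>{..<n}. \<iota> k = i} \<inter> xs ` {k\<in>{..<n}. \<iota> k = j} = {}" if "i \<noteq> j" for i j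
    using that inj by (auto simp: inj_on_def)
  ultimately show ?thesis by (simp add: disjoint_tuples_def cells_def)
qed

lemma inj_on_cells:
  assumes inj: "inj_on xs {..<n}"
  shows "inj_on (cells N n xs) ({..<n} \<rightarrow>\<^sub>E {..<N})"
proof (rule inj_onI)
  fix \<iota> \<iota>' assume \<iota>: "\<iota> \<in> {..<n} \<rightarrow>\<^sub>E {..<N}" and \<iota>': "\<iota>' \<in> {..<n} \<rightarrow>\<^sub>E {..<N}"
    and eq: "cells N n xs \<iota> = cells N n xs \<iota>'"
  show "\<iota> = \<iota>'"
  proof (rule extensionalityI[of _ "{..<n}"])
    fix k assume k: "k \<in> {..<n}"
    have lt: "\<iota> k < N" using \<iota> k by (auto simp: PiE_iff)
    then have "xs k \<in> cells N n xs \<iota>' (\<iota> k)" using k eq[symmetric] by (auto simp: cells_def)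
    then obtain k' where k': "k' < n" "\<iota>' k' = \<iota> k" "xs k = xs k'" using lt by (auto simp: cells_def)
    then have "k' = k" using inj k by (auto simp: inj_on_def)
    then show "\<iota> k = \<iota>' k" using k' by simp
  qed (use \<iota> \<iota>' in \<open>auto simp: PiE_def\<close>)
qed

lemma disjoint_tuples_in_image_cells:
  assumes Ys: "Ys \<in> disjoint_tuples N (xs ` {..<n})"
  shows "Ys \<in> cells N n xs ` ({..<n} \<rightarrow>\<^sub>E {..<N})"
proof -
  have disj: "\<And>i j. i < N \<Longrightarrow> j < N \<Longrightarrow> i \<noteq> j \<Longrightarrow> Ys i \<inter> Ys j = {}"
    and un: "(\<Union>i<N. Ys i) = xs ` {..<n}" and big: "\<And>i. N \<le> i \<Longrightarrow> Ys i = {}"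
    using Ys by (auto simp: disjoint_tuples_def)
  have ex: "\<exists>i<N. xs k \<in> Ys i" if "k < n" for k
    using un that by blast
  have uq: "i = j" if "i < N" "j < N" "y \<in> Ys i" "y \<in> Ys j" for i j y
    using disj[of i j] that by blast
  define \<iota> where "\<iota> k = (if k < n then (THE i. i < N \<and> xs k \<in> Ys i) else undefined)" for k
  have \<iota>k: "\<iota> k < N \<and> xs k \<in> Ys (\<iota> k)" if kn: "k < n" for k
  proof -
    obtain i where i: "i < N" "xs k \<in> Ys i" using ex[OF kn] by blast
    have "(THE i. i < N \<and> xs k \<in> Ys i) = i" using i uq by blast
    then show ?thesis using i kn by (simp add: \<iota>_def)
  qed
  have "cells N n xs \<iota> i = Ys i" for i
  proof (cases "i < N")
    case True
    have "Ys i \<subseteq> xs ` {k\<in>{..<n}. \<iota> k = i}"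
    proof
      fix y assume y: "y \<in> Ys i"
      then have "y \<in> xs ` {..<n}" using un True by blast
      then obtain k where k: "k < n" "y = xs k" by auto
      then have "\<iota> k = i" using \<iota>k[OF k(1)] uq[of "\<iota> k" i y] y True by auto
      then show "y \<in> xs ` {k\<in>{..<n}. \<iota> k = i}" using k by auto
    qed
    moreover have "xs ` {k\<in>{..<n}. \<iota> k = i} \<subseteq> Ys i" using \<iota>k by auto
    ultimately show ?thesis using True by (simp add: cells_def)
  qed (simp add: cells_def big)
  moreover have "\<iota> \<in> {..<n} \<rightarrow>\<^sub>E {..<N}" using \<iota>k by (auto simp: PiE_iff \<iota>_def extensional_def)
  ultimately show ?thesis by (metis image_eqI ext)
qed

lemma bij_betw_cells_disjoint_tuples:
  assumes "inj_on xs {..<n}"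
  shows "bij_betw (cells N n xs) ({..<n} \<rightarrow>\<^sub>E {..<N}) (disjoint_tuples N (xs ` {..<n}))"
  unfolding bij_betw_def
proof (intro conjI inj_on_cells[OF assms] equalityI subsetI)
  show "Ys \<in> cells N n xs ` ({..<n} \<rightarrow>\<^sub>E {..<N})" if "Ys \<in> disjoint_tuples N (xs ` {..<n})" for Ys
    using that by (rule disjoint_tuples_in_image_cells)
qed (auto intro: cells_in_disjoint_tuples[OF assms])

lemma cells_eq_scatter:
  assumes \<iota>: "\<iota> \<in> injections n N" and i: "i < N"
  shows "cells N n xs \<iota> i = scatter \<iota> n xs i"
proof (cases "i \<in> \<iota> ` {..<n}")
  case True
  then have "{k\<in>{..<n}. \<iota> k = i} = {inv_into {..<n} \<iota> i}"
    using injections_inj_on[OF \<iota>] by (auto simp: inv_into_f_f inj_on_def)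
  then show ?thesis using True i by (simp add: cells_def scatter_def)
qed (use i in \<open>auto simp: cells_def scatter_def\<close>)

text \<open>
  A partition of distinct points into \<open>N\<close> cells is a labelling of the points by the cells;
  when every factor vanishes on sets of two or more points, only injective labellings count.
\<close>

lemma sum_disjoint_tuples_eq_sum_injections:
  fixes c :: "nat \<Rightarrow> 'a set \<Rightarrow> real"
  assumes inj: "inj_on xs {..<n}"
    and zero: "\<And>i Y. i < N \<Longrightarrow> finite Y \<Longrightarrow> 2 \<le> card Y \<Longrightarrow> c i Y = 0"
  shows "(\<Sum>Ys\<in>disjoint_tuples N (xs ` {..<n}). \<Prod>i<N. c i (Ys i))
           = (\<Sum>\<iota>\<in>injections n N. \<Prod>i<N. c i (scatter \<iota> n xs i))"
proof -
  let ?P = "{..<n} \<rightarrow>\<^sub>E {..<N}"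
  have "(\<Sum>Ys\<in>disjoint_tuples N (xs ` {..<n}). \<Prod>i<N. c i (Ys i)) = (\<Sum>\<iota>\<in>?P. \<Prod>i<N. c i (cells N n xs \<iota> i))"
    by (rule sum.reindex_bij_betw[OF bij_betw_cells_disjoint_tuples[OF inj], symmetric])
  also have "\<dots> = (\<Sum>\<iota>\<in>injections n N. \<Prod>i<N. c i (cells N n xs \<iota> i))"
  proof (rule sum.mono_neutral_right)
    show "\<forall>\<iota>\<in>?P - injections n N. (\<Prod>i<N. c i (cells N n xs \<iota> i)) = 0"
    proof
      fix \<iota> assume \<iota>: "\<iota> \<in> ?P - injections n N"
      then obtain k k' where kk: "k < n" "k' < n" "k \<noteq> k'" "\<iota> k = \<iota> k'"
        by (auto simp: injections_def inj_on_def)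
      have lt: "\<iota> k < N" using \<iota> kk(1) by (auto simp: PiE_iff)
      have sub: "{xs k, xs k'} \<subseteq> cells N n xs \<iota> (\<iota> k)" using kk lt by (auto simp: cells_def)
      have fin: "finite (cells N n xs \<iota> (\<iota> k))" by (simp add: cells_def)
      have "xs k \<noteq> xs k'" using inj kk by (auto simp: inj_on_def)
      then have "2 \<le> card (cells N n xs \<iota> (\<iota> k))" using card_mono[OF fin sub] by simp
      then have "c (\<iota> k) (cells N n xs \<iota> (\<iota> k)) = 0" using zero[OF lt fin] by simp
      then show "(\<Prod>i<N. c i (cells N n xs \<iota> i)) = 0" using lt by (intro prod_zero) auto
    qed
  qed (auto simp: injections_def finite_PiE)
  also have "\<dots> = (\<Sum>\<iota>\<in>injections n N. \<Prod>i<N. c i (scatter \<iota> n xs i))"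
    by (intro sum.cong prod.cong refl) (simp add: cells_eq_scatter)
  finally show ?thesis .
qed

lemma scatter_inv_permutes:
  assumes p: "\<pi> permutes {..<N}" and \<iota>: "\<iota> \<in> injections n N"
  shows "scatter \<iota> n xs (inv \<pi> j) = scatter (restrict (\<pi> \<circ> \<iota>) {..<n}) n xs j"
proof -
  let ?R = "restrict (\<pi> \<circ> \<iota>) {..<n}"
  have img: "?R ` {..<n} = \<pi> ` \<iota> ` {..<n}" by auto
  have inj\<iota>: "inj_on \<iota> {..<n}" using injections_inj_on[OF \<iota>] .
  have injR: "inj_on ?R {..<n}" using injections_inj_on[OF restrict_comp_permutes_injections[OF \<iota> p]] .
  have pi1: "\<pi> (inv \<pi> x) = x" and pi2: "inv \<pi> (\<pi> x) = x" for x
    using permutes_inverses[OF p] by simp_all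
  have iff: "inv \<pi> j \<in> \<iota> ` {..<n} \<longleftrightarrow> j \<in> \<pi> ` \<iota> ` {..<n}"
  proof
    assume "inv \<pi> j \<in> \<iota> ` {..<n}"
    then show "j \<in> \<pi> ` \<iota> ` {..<n}" using pi1[of j] by (metis image_eqI)
  next
    assume "j \<in> \<pi> ` \<iota> ` {..<n}"
    then obtain y where "y \<in> \<iota> ` {..<n}" "j = \<pi> y" by blast
    then show "inv \<pi> j \<in> \<iota> ` {..<n}" using pi2[of y] by simp
  qed
  show ?thesis
  proof (cases "inv \<pi> j \<in> \<iota> ` {..<n}")
    case True
    then obtain k where k: "k < n" "inv \<pi> j = \<iota> k" by auto
    then have j: "j = \<pi> (\<iota> k)" using pi1[of j] by simp
    have "inv_into {..<n} \<iota> (inv \<pi> j) = k" using k inj\<iota> by (simp add: inv_into_f_f)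
    moreover have "?R k = j" using k j by simp
    then have "inv_into {..<n} ?R j = k" using k injR by (metis inv_into_f_f lessThan_iff)
    ultimately show ?thesis using True iff img by (simp add: scatter_def)
  next
    case False
    then show ?thesis using iff img by (simp add: scatter_def)
  qed
qed

text \<open>
  \<open>\<pi> \<mapsto> \<pi> \<circ> \<iota>\<close> maps the permutations onto the injections, every fibre having
  \<open>(N - n)!\<close> elements.
\<close>

lemma sum_permutes_scatter:
  fixes c :: "nat \<Rightarrow> 'a set \<Rightarrow> real"
  assumes \<iota>: "\<iota> \<in> injections n N"
  shows "(\<Sum>\<pi> | \<pi> permutes {..<N}. \<Prod>i<N. c (\<pi> i) (scatter \<iota> n xs i))
       = fact (N - n) * (\<Sum>\<tau>\<in>injections n N. \<Prod>j<N. c j (scatter \<tau> n xs j))"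
proof -
  let ?R = "\<lambda>\<pi>. restrict (\<pi> \<circ> \<iota>) {..<n}"
  let ?T = "\<lambda>\<tau>. \<Prod>j<N. c j (scatter \<tau> n xs j)"
  let ?Pm = "{\<pi>. \<pi> permutes {..<N}}"
  have fin: "finite ?Pm" by (simp add: finite_permutations)
  have trm: "(\<Prod>i<N. c (\<pi> i) (scatter \<iota> n xs i)) = ?T (?R \<pi>)" if p: "\<pi> permutes {..<N}" for \<pi>
  proof -
    have bij: "bij_betw \<pi> {..<N} {..<N}" using p by (rule permutes_imp_bij)
    have "(\<Prod>i<N. c (\<pi> i) (scatter \<iota> n xs i)) = (\<Prod>i<N. (\<lambda>j. c j (scatter \<iota> n xs (inv \<pi> j))) (\<pi> i))"
      using p by (simp add: permutes_inverses(2))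
    also have "\<dots> = (\<Prod>j<N. c j (scatter \<iota> n xs (inv \<pi> j)))"
      by (rule prod.reindex_bij_betw[OF bij])
    also have "\<dots> = ?T (?R \<pi>)" by (simp only: scatter_inv_permutes[OF p \<iota>])
    finally show ?thesis .
  qed
  have "(\<Sum>\<pi>\<in>?Pm. \<Prod>i<N. c (\<pi> i) (scatter \<iota> n xs i)) = (\<Sum>\<pi>\<in>?Pm. ?T (?R \<pi>))"
    using trm by simp
  also have "\<dots> = (\<Sum>\<tau>\<in>injections n N. \<Sum>\<pi>\<in>{\<pi>. \<pi> \<in> ?Pm \<and> ?R \<pi> = \<tau>}. ?T (?R \<pi>))"
    by (rule sum.group[symmetric]) (use fin restrict_comp_permutes_injections[OF \<iota>] in auto)
  also have "\<dots> = (\<Sum>\<tau>\<in>injections n N. of_nat (fact (N - n)) * ?T \<tau>)"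
  proof (rule sum.cong[OF refl])
    fix \<tau> assume \<tau>: "\<tau> \<in> injections n N"
    have "(\<Sum>\<pi>\<in>{\<pi>. \<pi> \<in> ?Pm \<and> ?R \<pi> = \<tau>}. ?T (?R \<pi>)) = (\<Sum>\<pi>\<in>{\<pi>. \<pi> \<in> ?Pm \<and> ?R \<pi> = \<tau>}. ?T \<tau>)"
      by (rule sum.cong) auto
    also have "\<dots> = of_nat (card {\<pi>. \<pi> permutes {..<N} \<and> ?R \<pi> = \<tau>}) * ?T \<tau>" by simp
    also have "card {\<pi>. \<pi> permutes {..<N} \<and> ?R \<pi> = \<tau>} = fact (N - n)" by (rule card_permutes_fiber[OF \<iota> \<tau>])
    finally show "(\<Sum>\<pi>\<in>{\<pi>. \<pi> \<in> ?Pm \<and> ?R \<pi> = \<tau>}. ?T (?R \<pi>)) = of_nat (fact (N - n)) * ?T \<tau>" .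
  qed
  also have "\<dots> = fact (N - n) * (\<Sum>\<tau>\<in>injections n N. ?T \<tau>)"
    by (simp add: sum_distrib_left)
  finally show ?thesis by simp
qed

subsection \<open>Bernoulli densities\<close>

lemma bernoulli_density_eq_0: "finite Y \<Longrightarrow> 2 \<le> card Y \<Longrightarrow> bernoulli_density r p Y = 0"
  by (auto simp: bernoulli_density_def)

lemma is_bernoulliE:
  assumes "is_bernoulli c"
  obtains r p where "0 \<le> r" "r \<le> 1" "p \<in> borel_measurable lborel" "\<And>x. 0 \<le> p x"
    "(\<integral>\<^sup>+ x. ennreal (p x) \<partial>lborel) = 1" "c = bernoulli_density r p"
  using assms unfolding is_bernoulli_def is_state_pdf_def by blast

lemma is_bernoulli_nonneg: "is_bernoulli c \<Longrightarrow> 0 \<le> c Y"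
  by (erule is_bernoulliE) (auto simp: bernoulli_density_def)

lemma is_bernoulli_empty_le_1: "is_bernoulli c \<Longrightarrow> c {} \<le> 1"
  by (erule is_bernoulliE) (simp add: bernoulli_density_def)

lemma is_bernoulli_eq_0: "is_bernoulli c \<Longrightarrow> finite Y \<Longrightarrow> 2 \<le> card Y \<Longrightarrow> c Y = 0"
  by (erule is_bernoulliE) (simp add: bernoulli_density_eq_0)

lemma borel_measurable_is_bernoulli_singleton:
  "is_bernoulli c \<Longrightarrow> (\<lambda>y. c {y}) \<in> borel_measurable lborel"
  by (erule is_bernoulliE) (simp add: bernoulli_density_def)

lemma nn_integral_is_bernoulli_singleton_le_1:
  assumes "is_bernoulli c"
  shows "(\<integral>\<^sup>+y. ennreal (c {y}) \<partial>lborel) \<le> 1"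
proof -
  obtain r p where rp: "0 \<le> r" "r \<le> 1" "p \<in> borel_measurable lborel" "\<And>x. 0 \<le> p x"
    "(\<integral>\<^sup>+ x. ennreal (p x) \<partial>lborel) = 1" "c = bernoulli_density r p"
    using assms by (blast elim: is_bernoulliE)
  have "(\<integral>\<^sup>+y. ennreal (c {y}) \<partial>lborel) = ennreal r * (\<integral>\<^sup>+ x. ennreal (p x) \<partial>lborel)"
    using rp by (simp add: bernoulli_density_def ennreal_mult nn_integral_cmult)
  then show ?thesis using rp by simp
qed

lemma borel_measurable_is_bernoulli_singletons_on:
  "is_bernoulli c \<Longrightarrow>
     (\<lambda>x. c (singletons_on S x i)) \<in> borel_measurable (PiM S (\<lambda>_. lborel::'a::euclidean_space measure))"
  by (cases "i \<in> S")
     (auto simp: singletons_on_def intro: measurable_compose[OF measurable_component_singleton]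
       borel_measurable_is_bernoulli_singleton)

lemma borel_measurable_is_bernoulli_scatter:
  "is_bernoulli c \<Longrightarrow>
     (\<lambda>xs. c (scatter \<iota> n xs i)) \<in> borel_measurable (lborel_tuples n)"
  by (cases "i \<in> \<iota> ` {..<n}")
     (auto simp: scatter_def intro!: measurable_compose[OF measurable_component_singleton]
       borel_measurable_is_bernoulli_singleton inv_into_into)

lemma nn_integral_prod_bernoulli_scatter_le_1:
  fixes c :: "nat \<Rightarrow> 'a::euclidean_space set \<Rightarrow> real"
  assumes c: "\<And>j. j < N \<Longrightarrow> is_bernoulli (c j)" and \<iota>: "\<iota> \<in> injections n N"
  shows "(\<integral>\<^sup>+xs. ennreal (\<Prod>j<N. c j (scatter \<iota> n xs j)) \<partial>lborel_tuples n) \<le> 1"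
proof -
  let ?I = "\<iota> ` {..<n}"
  have inj\<iota>: "inj_on \<iota> {..<n}" and img: "?I \<subseteq> {..<N}"
    using injections_inj_on[OF \<iota>] injections_image_subset[OF \<iota>] .
  have pw: "(\<Prod>j<N. c j (scatter \<iota> n xs j)) \<le> (\<Prod>k<n. c (\<iota> k) {xs k})" for xs
  proof -
    have "(\<Prod>j<N. c j (scatter \<iota> n xs j))
        = (\<Prod>j\<in>?I. c j {xs (inv_into {..<n} \<iota> j)}) * (\<Prod>j\<in>{..<N} - ?I. c j {})"
      using img by (subst prod.subset_diff[of ?I]) (auto simp: scatter_def intro!: prod.cong)
    also have "\<dots> \<le> (\<Prod>j\<in>?I. c j {xs (inv_into {..<n} \<iota> j)})"
      using img c
      by (intro mult_left_le prod_le_1 prod_nonneg) (auto simp: is_bernoulli_nonneg is_bernoulli_empty_le_1)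
    also have "\<dots> = (\<Prod>k<n. c (\<iota> k) {xs k})"
      using inj\<iota> by (simp add: prod.reindex inv_into_f_f)
    finally show ?thesis .
  qed
  have "(\<integral>\<^sup>+xs. ennreal (\<Prod>j<N. c j (scatter \<iota> n xs j)) \<partial>lborel_tuples n)
      \<le> (\<integral>\<^sup>+xs. (\<Prod>k<n. ennreal (c (\<iota> k) {xs k})) \<partial>lborel_tuples n)"
  proof (rule nn_integral_mono)
    fix xs :: "nat \<Rightarrow> 'a"
    have "ennreal (\<Prod>j<N. c j (scatter \<iota> n xs j)) \<le> ennreal (\<Prod>k<n. c (\<iota> k) {xs k})"
      using pw by (rule ennreal_leI)
    also have "\<dots> = (\<Prod>k<n. ennreal (c (\<iota> k) {xs k}))"
      using img c by (intro prod_ennreal[symmetric]) (auto simp: is_bernoulli_nonneg)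
    finally show "ennreal (\<Prod>j<N. c j (scatter \<iota> n xs j)) \<le> (\<Prod>k<n. ennreal (c (\<iota> k) {xs k}))" .
  qed
  also have "\<dots> = (\<Prod>k<n. \<integral>\<^sup>+y. ennreal (c (\<iota> k) {y}) \<partial>lborel)"
    using img borel_measurable_is_bernoulli_singleton[OF c]
    by (intro product_sigma_finite.product_nn_integral_prod[OF product_sigma_finite_lborel])
       auto
  also have "\<dots> \<le> 1"
    using img c by (intro prod_le_1) (auto intro: nn_integral_is_bernoulli_singleton_le_1)
  finally show ?thesis .
qed

lemma borel_measurable_xlogy[measurable]:
  assumes [measurable]: "f \<in> borel_measurable M" "g \<in> borel_measurable M"
  shows "(\<lambda>x. xlogy (f x) (g x)) \<in> borel_measurable M"
  unfolding xlogy_def by measurable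

lemma borel_measurable_kl_term[measurable]:
  assumes [measurable]: "f \<in> borel_measurable M" "g \<in> borel_measurable M"
  shows "(\<lambda>x. kl_term (f x) (g x)) \<in> borel_measurable M"
  unfolding kl_term_def by measurable

subsection \<open>Pointwise identities between positive and negative parts\<close>

lemma ennreal_eq_ennreal_max_0: "ennreal x = ennreal (max x 0)"
  by (cases "x \<ge> 0") (auto simp: ennreal_neg)

lemma ennreal_add3_max_0:
  "ennreal a + ennreal b + ennreal c = ennreal (max a 0 + max b 0 + max c 0)"
proof -
  have "ennreal (max a 0 + max b 0 + max c 0) = ennreal (max a 0) + ennreal (max b 0) + ennreal (max c 0)"
    by (simp add: ennreal_plus)
  then show ?thesis by (metis ennreal_eq_ennreal_max_0)
qed

lemma sum_ennreal_eq_ennreal_sum_max_0: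
  assumes "finite B"
  shows "(\<Sum>b\<in>B. ennreal (x b)) = ennreal (\<Sum>b\<in>B. max (x b) 0)"
proof -
  have "(\<Sum>b\<in>B. ennreal (x b)) = (\<Sum>b\<in>B. ennreal (max (x b) 0))"
    by (rule sum.cong[OF refl]) (rule ennreal_eq_ennreal_max_0)
  also have "\<dots> = ennreal (\<Sum>b\<in>B. max (x b) 0)" by (rule sum_ennreal) simp
  finally show ?thesis .
qed

lemma ennreal_add3_eq_uminus:
  assumes "a + b + c = (0::real)"
  shows "ennreal a + ennreal b + ennreal c = ennreal (- a) + ennreal (- b) + ennreal (- c)"
proof -
  have "ennreal a + ennreal b + ennreal c = ennreal (max a 0 + max b 0 + max c 0)"
    by (rule ennreal_add3_max_0)
  also have "\<dots> = ennreal (max (- a) 0 + max (- b) 0 + max (- c) 0)"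
    using assms by (intro arg_cong[where f = ennreal]) auto
  also have "\<dots> = ennreal (- a) + ennreal (- b) + ennreal (- c)"
    by (rule ennreal_add3_max_0[symmetric])
  finally show ?thesis .
qed

lemma e2ennreal_xlogy_pos:
  assumes "0 < s"
  shows "e2ennreal (xlogy p s) = ennreal (p * ln s)" "e2ennreal (- xlogy p s) = ennreal (- (p * ln s))"
  using assms by (auto simp: xlogy_def e2ennreal_neg)

lemma e2ennreal_xlogy_zero:
  "e2ennreal (xlogy p 0) = 0" "e2ennreal (- xlogy p 0) = (if p = 0 then 0 else \<infinity>)"
  by (auto simp: xlogy_def e2ennreal_neg)

lemma e2ennreal_kl_term_xlogy_balance:
  assumes p: "0 \<le> p" and q: "0 \<le> q"
  shows "e2ennreal (kl_term p q) + e2ennreal (xlogy p q) + e2ennreal (- xlogy p p)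
       = e2ennreal (- kl_term p q) + e2ennreal (- xlogy p q) + e2ennreal (xlogy p p)"
proof (cases "p = 0 \<or> q = 0")
  case True
  then show ?thesis using p by (auto simp: kl_term_def xlogy_def e2ennreal_neg)
next
  case False
  then have "0 < p" "0 < q" using p q by auto
  then have "kl_term p q = ereal (p * ln p - p * ln q)"
      "xlogy p q = ereal (p * ln q)" "xlogy p p = ereal (p * ln p)"
    by (simp_all add: kl_term_def xlogy_def ln_div right_diff_distrib)
  then show ?thesis
    by (simp add: ennreal_add3_eq_uminus[of "p * ln p - p * ln q" "p * ln q" "- (p * ln p)"])
qed

lemma xlogy_mixture_balance_zero:
  fixes c :: "'i \<Rightarrow> real" and p :: "'i \<Rightarrow> 'j \<Rightarrow> real"
  assumes finA: "finite A" and finB: "finite B"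
    and c: "\<And>a. a \<in> A \<Longrightarrow> 0 \<le> c a" and p: "\<And>a b. a \<in> A \<Longrightarrow> b \<in> B \<Longrightarrow> 0 \<le> p a b"
    and F: "F = (\<Sum>a\<in>A. c a * (\<Sum>b\<in>B. p a b))"
  shows "(\<Sum>a\<in>A. ennreal (c a) * (\<Sum>b\<in>B. e2ennreal (xlogy (p a b) 0))) + e2ennreal (- xlogy F 0)
       = (\<Sum>a\<in>A. ennreal (c a) * (\<Sum>b\<in>B. e2ennreal (- xlogy (p a b) 0))) + e2ennreal (xlogy F 0)
         + ennreal (t * F)"
proof (cases "\<exists>a\<in>A. \<exists>b\<in>B. c a \<noteq> 0 \<and> p a b \<noteq> 0")
  case True
  then obtain a b where a: "a \<in> A" and b: "b \<in> B" and ab: "0 < c a" "0 < p a b"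
    using c p by (metis order_le_neq_trans)
  have "c a * p a b \<le> c a * (\<Sum>b\<in>B. p a b)"
    using ab b finB p[OF a] by (intro mult_left_mono member_le_sum) auto
  also have "\<dots> \<le> F"
    unfolding F using a finA c p by (intro member_le_sum mult_nonneg_nonneg sum_nonneg) auto
  finally have "F \<noteq> 0" using mult_pos_pos[OF ab] by linarith
  have "\<infinity> \<le> (\<Sum>b\<in>B. e2ennreal (- xlogy (p a b) 0))"
    using member_le_sum[of b B "\<lambda>b. e2ennreal (- xlogy (p a b) 0)"] ab b finB
    by (simp add: e2ennreal_xlogy_zero)
  then have "ennreal (c a) * (\<Sum>b\<in>B. e2ennreal (- xlogy (p a b) 0)) = \<infinity>"
    using ab by (simp add: top_unique ennreal_mult_top)
  then have "(\<Sum>a\<in>A. ennreal (c a) * (\<Sum>b\<in>B. e2ennreal (- xlogy (p a b) 0))) = \<infinity>"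
    using member_le_sum[of a A "\<lambda>a. ennreal (c a) * (\<Sum>b\<in>B. e2ennreal (- xlogy (p a b) 0))"] a finA
    by (simp add: top_unique)
  then show ?thesis using \<open>F \<noteq> 0\<close> by (simp add: e2ennreal_xlogy_zero)
next
  case False
  then have "F = 0" unfolding F by (auto intro!: sum.neutral)
  moreover have "(\<Sum>a\<in>A. ennreal (c a) * (\<Sum>b\<in>B. e2ennreal (- xlogy (p a b) 0))) = 0"
  proof (rule sum.neutral, rule ballI)
    fix a assume "a \<in> A"
    then show "ennreal (c a) * (\<Sum>b\<in>B. e2ennreal (- xlogy (p a b) 0)) = 0"
      using False by (cases "c a = 0") (auto simp: e2ennreal_xlogy_zero)
  qed
  ultimately show ?thesis by (simp add: e2ennreal_xlogy_zero)
qed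

lemma sum_mult_sum_ennreal_eq_ennreal_max_0:
  assumes "finite B" and c: "\<And>a. a \<in> A \<Longrightarrow> 0 \<le> c a"
  shows "(\<Sum>a\<in>A. ennreal (c a) * (\<Sum>b\<in>B. ennreal (x a b)))
           = ennreal (\<Sum>a\<in>A. c a * (\<Sum>b\<in>B. max (x a b) 0))"
proof -
  have "(\<Sum>a\<in>A. ennreal (c a) * (\<Sum>b\<in>B. ennreal (x a b)))
      = (\<Sum>a\<in>A. ennreal (c a * (\<Sum>b\<in>B. max (x a b) 0)))"
    using c by (intro sum.cong refl)
      (simp add: sum_ennreal_eq_ennreal_sum_max_0[OF assms(1)] ennreal_mult' sum_nonneg)
  also have "\<dots> = ennreal (\<Sum>a\<in>A. c a * (\<Sum>b\<in>B. max (x a b) 0))"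
    using c by (intro sum_ennreal) (auto intro!: mult_nonneg_nonneg sum_nonneg)
  finally show ?thesis .
qed

lemma xlogy_mixture_balance_pos:
  fixes c :: "'i \<Rightarrow> real" and p :: "'i \<Rightarrow> 'j \<Rightarrow> real"
  assumes finB: "finite B"
    and c: "\<And>a. a \<in> A \<Longrightarrow> 0 \<le> c a" and p: "\<And>a b. a \<in> A \<Longrightarrow> b \<in> B \<Longrightarrow> 0 \<le> p a b"
    and F: "F = (\<Sum>a\<in>A. c a * (\<Sum>b\<in>B. p a b))" and G: "0 < G" and K: "1 \<le> K"
  shows "(\<Sum>a\<in>A. ennreal (c a) * (\<Sum>b\<in>B. e2ennreal (xlogy (p a b) (K * G)))) + e2ennreal (- xlogy F G)
       = (\<Sum>a\<in>A. ennreal (c a) * (\<Sum>b\<in>B. e2ennreal (- xlogy (p a b) (K * G)))) + e2ennreal (xlogy F G)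
         + ennreal (ln K * F)"
proof -
  define x where "x a b = p a b * ln (K * G)" for a b
  define y where "y = F * ln G"
  define z where "z = ln K * F"
  define P where "P = (\<Sum>a\<in>A. c a * (\<Sum>b\<in>B. max (x a b) 0))"
  define Q where "Q = (\<Sum>a\<in>A. c a * (\<Sum>b\<in>B. max (- x a b) 0))"
  have z0: "0 \<le> z" unfolding z_def F using K c p by (intro mult_nonneg_nonneg sum_nonneg) auto
  have PQ: "0 \<le> P" "0 \<le> Q" unfolding P_def Q_def using c by (auto intro!: sum_nonneg mult_nonneg_nonneg)
  have "(\<Sum>a\<in>A. c a * (\<Sum>b\<in>B. x a b)) = (\<Sum>a\<in>A. c a * (\<Sum>b\<in>B. p a b) * (ln K + ln G))"
    using K G by (simp add: x_def ln_mult sum_distrib_right mult.assoc)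
  also have "\<dots> = F * (ln K + ln G)" unfolding F by (rule sum_distrib_right[symmetric])
  also have "\<dots> = y + z" by (simp add: y_def z_def distrib_left mult.commute)
  finally have xyz: "(\<Sum>a\<in>A. c a * (\<Sum>b\<in>B. x a b)) = y + z" .
  have "max (x a b) 0 = max (- x a b) 0 + x a b" for a b by auto
  then have "P = Q + (\<Sum>a\<in>A. c a * (\<Sum>b\<in>B. x a b))"
    unfolding P_def Q_def by (simp add: sum.distrib distrib_left)
  then have real_eq: "P + max (- y) 0 = Q + max y 0 + z" using xyz by auto
  have parts: "(\<Sum>a\<in>A. ennreal (c a) * (\<Sum>b\<in>B. e2ennreal (xlogy (p a b) (K * G)))) = ennreal P"
    "(\<Sum>a\<in>A. ennreal (c a) * (\<Sum>b\<in>B. e2ennreal (- xlogy (p a b) (K * G)))) = ennreal Q"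
    using K G unfolding P_def Q_def
    by (simp_all add: e2ennreal_xlogy_pos x_def sum_mult_sum_ennreal_eq_ennreal_max_0[OF finB c])
  have ends: "e2ennreal (- xlogy F G) = ennreal (max (- y) 0)" "e2ennreal (xlogy F G) = ennreal (max y 0)"
    using G ennreal_eq_ennreal_max_0[of "- (F * ln G)"] ennreal_eq_ennreal_max_0[of "F * ln G"]
    by (simp_all add: e2ennreal_xlogy_pos y_def)
  have "ennreal P + ennreal (max (- y) 0) = ennreal (P + max (- y) 0)"
    using PQ by (simp add: ennreal_plus)
  also have "\<dots> = ennreal Q + ennreal (max y 0) + ennreal z"
    using real_eq PQ z0 by (simp add: ennreal_plus)
  finally show ?thesis unfolding parts ends z_def .
qed

text \<open>
  The weighted labelled terms \<open>c\<^sub>a p\<^sub>a\<^sub>b log (K G)\<close> add up to \<open>F log G + F log K\<close>;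
  this is that identity with each side split into positive and negative parts.
\<close>

lemma xlogy_mixture_balance:
  fixes c :: "'i \<Rightarrow> real" and p :: "'i \<Rightarrow> 'j \<Rightarrow> real"
  assumes "finite A" "finite B"
    and "\<And>a. a \<in> A \<Longrightarrow> 0 \<le> c a" "\<And>a b. a \<in> A \<Longrightarrow> b \<in> B \<Longrightarrow> 0 \<le> p a b"
    and "F = (\<Sum>a\<in>A. c a * (\<Sum>b\<in>B. p a b))" and G: "0 \<le> G" and "1 \<le> K"
  shows "(\<Sum>a\<in>A. ennreal (c a) * (\<Sum>b\<in>B. e2ennreal (xlogy (p a b) (K * G)))) + e2ennreal (- xlogy F G)
       = (\<Sum>a\<in>A. ennreal (c a) * (\<Sum>b\<in>B. e2ennreal (- xlogy (p a b) (K * G)))) + e2ennreal (xlogy F G)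
         + ennreal (ln K * F)"
proof (cases "G = 0")
  case True
  then show ?thesis using xlogy_mixture_balance_zero[OF assms(1-5)] by simp
next
  case False
  then show ?thesis using xlogy_mixture_balance_pos[OF assms(2-5)] G assms(7) by simp
qed

lemma mult_ln_le_mult_ln_add:
  fixes p s :: real
  assumes "0 < p" "0 < s"
  shows "p * ln s \<le> p * ln p + s - p"
proof -
  have "p * ln (s / p) \<le> p * (s / p - 1)"
    using assms by (intro mult_left_mono ln_le_minus_one) auto
  also have "\<dots> = s - p" using assms by (simp add: field_simps)
  finally show ?thesis using assms by (simp add: ln_div right_diff_distrib)
qed

text \<open>
  A component dominated by a mixture, \<open>w p \<le> F\<close>, has its cross term controlled by the entropy
  term of \<open>F\<close>.
\<close>

lemma e2ennreal_xlogy_le_dominated: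
  assumes w: "0 < w" "w \<le> 1" and p: "0 \<le> p" and wp: "w * p \<le> F" and s: "0 \<le> s"
  shows "e2ennreal (xlogy p s) \<le> ennreal (1 / w * \<bar>F * ln F\<bar> + ln (1 / w) / w * F + s)"
proof (cases "p = 0 \<or> s = 0")
  case True then show ?thesis by (auto simp: xlogy_def e2ennreal_neg)
next
  case False
  then have p0: "0 < p" and s0: "0 < s" using p s by auto
  have F0: "0 < F" using wp w p0 by (metis mult_pos_pos order_less_le_trans)
  have "p * ln p \<le> 1 / w * \<bar>F * ln F\<bar> + ln (1 / w) / w * F"
  proof (cases "p \<le> 1")
    case True
    then have "p * ln p \<le> 0" using p0 by (simp add: mult_nonneg_nonpos)
    moreover have "0 \<le> 1 / w * \<bar>F * ln F\<bar> + ln (1 / w) / w * F" using w F0 by simp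
    ultimately show ?thesis by linarith
  next
    case False
    have pq: "p \<le> F / w" using wp w by (simp add: field_simps mult.commute)
    have "p * ln p \<le> F / w * ln (F / w)"
      using pq p0 False by (intro mult_mono) auto
    also have "\<dots> = 1 / w * (F * ln F) + ln (1 / w) / w * F"
      using F0 w by (simp add: ln_div field_simps)
    also have "\<dots> \<le> 1 / w * \<bar>F * ln F\<bar> + ln (1 / w) / w * F"
      using w by (intro add_right_mono mult_left_mono) auto
    finally show ?thesis .
  qed
  then have "p * ln s \<le> 1 / w * \<bar>F * ln F\<bar> + ln (1 / w) / w * F + s"
    using mult_ln_le_mult_ln_add[OF p0 s0] p0 by linarith
  then show ?thesis using False by (simp add: xlogy_def ennreal_leI)
qed

lemma e2ennreal_uminus_kl_term_le:
  assumes p: "0 \<le> p" and q: "0 \<le> q"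
  shows "e2ennreal (- kl_term p q) \<le> ennreal q"
proof (cases "p = 0 \<or> q = 0")
  case True then show ?thesis by (auto simp: kl_term_def e2ennreal_neg)
next
  case False
  then have p0: "0 < p" and q0: "0 < q" using p q by auto
  have "- (p * ln (p / q)) \<le> q"
    using mult_ln_le_mult_ln_add[OF p0 q0] p0 q0 by (simp add: ln_div algebra_simps)
  then show ?thesis using False by (simp add: kl_term_def ennreal_leI)
qed

lemma e2ennreal_xlogy_self_le:
  assumes "0 \<le> p"
  shows "e2ennreal (xlogy p p) \<le> ennreal \<bar>p * ln p\<bar>" "e2ennreal (- xlogy p p) \<le> ennreal \<bar>p * ln p\<bar>"
  using assms by (cases "p = 0"; auto simp: xlogy_def intro: ennreal_leI)+

lemma borel_measurable_e2ennreal_xlogy_kl_term: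
  assumes [measurable]: "F \<in> borel_measurable M" "S \<in> borel_measurable M"
  shows "(\<lambda>x. e2ennreal (xlogy (F x) (S x))) \<in> borel_measurable M"
    "(\<lambda>x. e2ennreal (- xlogy (F x) (S x))) \<in> borel_measurable M"
    "(\<lambda>x. e2ennreal (kl_term (F x) (S x))) \<in> borel_measurable M"
    "(\<lambda>x. e2ennreal (- kl_term (F x) (S x))) \<in> borel_measurable M"
  by measurable

lemma nn_integral_lincomb3_less_top:
  assumes m: "u1 \<in> borel_measurable M" "u2 \<in> borel_measurable M" "u3 \<in> borel_measurable M"
    and nn: "\<And>x. 0 \<le> u1 x" "\<And>x. 0 \<le> u2 x" "\<And>x. 0 \<le> u3 x"
    and fin: "(\<integral>\<^sup>+x. ennreal (u1 x) \<partial>M) < \<infinity>" "(\<integral>\<^sup>+x. ennreal (u2 x) \<partial>M) < \<infinity>"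
      "(\<integral>\<^sup>+x. ennreal (u3 x) \<partial>M) < \<infinity>"
    and c: "0 \<le> \<alpha>" "0 \<le> \<beta>" "0 \<le> \<gamma>"
  shows "(\<integral>\<^sup>+x. ennreal (\<alpha> * u1 x + \<beta> * u2 x + \<gamma> * u3 x) \<partial>M) < \<infinity>"
proof -
  have "(\<integral>\<^sup>+x. ennreal (\<alpha> * u1 x + \<beta> * u2 x + \<gamma> * u3 x) \<partial>M)
      = ennreal \<alpha> * (\<integral>\<^sup>+x. ennreal (u1 x) \<partial>M) + ennreal \<beta> * (\<integral>\<^sup>+x. ennreal (u2 x) \<partial>M)
        + ennreal \<gamma> * (\<integral>\<^sup>+x. ennreal (u3 x) \<partial>M)"
    using m nn c by (simp add: ennreal_plus ennreal_mult nn_integral_add nn_integral_cmult)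
  also have "\<dots> < \<infinity>" using fin by (simp add: ennreal_mult_less_top)
  finally show ?thesis .
qed

lemma less_top_ennrealE:
  assumes "(P::ennreal) < \<infinity>"
  obtains p where "0 \<le> p" "P = ennreal p"
  using assms by (cases P rule: ennreal_cases) auto

lemma abs_enn2ereal_diff_neq_infinity:
  assumes "P < \<infinity>" "Q < \<infinity>"
  shows "\<bar>enn2ereal P - enn2ereal Q\<bar> \<noteq> \<infinity>"
proof -
  obtain p q where "0 \<le> p" "P = ennreal p" "0 \<le> q" "Q = ennreal q"
    using assms by (metis less_top_ennrealE)
  then show ?thesis by simp
qed

lemma ereal_mult_enn2ereal_diff:
  assumes w: "0 \<le> w" and P: "ennreal w * P < \<infinity>"
  shows "ereal w * (enn2ereal P - enn2ereal Q) = enn2ereal (ennreal w * P) - enn2ereal (ennreal w * Q)"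
proof (cases "w = 0")
  case True then show ?thesis by simp
next
  case False
  then have w0: "0 < w" and Pf: "P < \<infinity>" using w P by (auto simp: ennreal_mult_less_top)
  obtain p where p: "0 \<le> p" "P = ennreal p" using Pf by (rule less_top_ennrealE)
  show ?thesis
  proof (cases Q rule: ennreal_cases)
    case (real q)
    then show ?thesis using w0 p by (simp add: ennreal_mult[symmetric] algebra_simps)
  next
    case top
    have "ennreal w * top = top" using w0 by (simp add: ennreal_mult_top)
    then show ?thesis using w0 p top by (simp add: ennreal_mult[symmetric])
  qed
qed

lemma ereal_minus_add_minus:
  fixes x1 x2 :: real and y1 y2 :: ereal
  assumes "0 \<le> y1" "0 \<le> y2"
  shows "(ereal x1 - y1) + (ereal x2 - y2) = ereal (x1 + x2) - (y1 + y2)"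
  using assms by (cases y1; cases y2) auto

lemma sum_enn2ereal_diff:
  assumes "finite I" "\<And>a. a \<in> I \<Longrightarrow> P a < \<infinity>"
  shows "(\<Sum>a\<in>I. enn2ereal (P a) - enn2ereal (Q a)) = enn2ereal (\<Sum>a\<in>I. P a) - enn2ereal (\<Sum>a\<in>I. Q a)"
  using assms
proof (induction I rule: finite_induct)
  case empty then show ?case by simp
next
  case (insert a I)
  have Pa: "P a < \<infinity>" and SP: "(\<Sum>a\<in>I. P a) < \<infinity>" using insert by (auto simp: ennreal_sum_less_top)
  obtain p where p: "0 \<le> p" "P a = ennreal p" using Pa by (rule less_top_ennrealE)
  obtain sp where sp: "0 \<le> sp" "(\<Sum>a\<in>I. P a) = ennreal sp" using SP by (rule less_top_ennrealE)
  have "(\<Sum>a\<in>insert a I. enn2ereal (P a) - enn2ereal (Q a))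
      = (enn2ereal (P a) - enn2ereal (Q a)) + (enn2ereal (\<Sum>a\<in>I. P a) - enn2ereal (\<Sum>a\<in>I. Q a))"
    using insert by simp
  also have "\<dots> = ereal (p + sp) - (enn2ereal (Q a) + enn2ereal (\<Sum>a\<in>I. Q a))"
    using p sp by (simp add: ereal_minus_add_minus)
  also have "\<dots> = enn2ereal (\<Sum>a\<in>insert a I. P a) - enn2ereal (\<Sum>a\<in>insert a I. Q a)"
  proof -
    have "(\<Sum>a\<in>insert a I. P a) = ennreal (p + sp)" using insert p sp by simp
    moreover have "enn2ereal (\<Sum>a\<in>insert a I. Q a) = enn2ereal (Q a) + enn2ereal (\<Sum>a\<in>I. Q a)"
      using insert by (simp add: plus_ennreal.rep_eq)
    ultimately show ?thesis using p sp by (simp add: plus_ennreal.rep_eq)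
  qed
  finally show ?case .
qed

lemma enn2ereal_diff_eq_diff_add_of_add_eq:
  fixes P Q EN EP C :: ennreal
  assumes eq: "P + EN = Q + EP + C" and fin: "P < \<infinity>" "EP < \<infinity>" "C < \<infinity>"
  shows "enn2ereal P - enn2ereal Q = (enn2ereal EP - enn2ereal EN) + enn2ereal C"
proof -
  obtain p where p: "0 \<le> p" "P = ennreal p" using fin(1) by (rule less_top_ennrealE)
  obtain ep where ep: "0 \<le> ep" "EP = ennreal ep" using fin(2) by (rule less_top_ennrealE)
  obtain c where c: "0 \<le> c" "C = ennreal c" using fin(3) by (rule less_top_ennrealE)
  show ?thesis
  proof (cases EN rule: ennreal_cases)
    case top
    then have "Q + EP + C = top" using eq by simp
    then have "Q = top" using ep c by simp
    then show ?thesis using top p ep c by simp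
  next
    case (real en)
    note ENr = real
    show ?thesis
    proof (cases Q rule: ennreal_cases)
      case top
      then have "P + EN = top" using eq by simp
      then show ?thesis using p ENr by simp
    next
      case (real q)
      note real2 = real
      have "ennreal (p + en) = ennreal (q + ep + c)"
        using eq p ep c ENr real2 by simp
      then have "p + en = q + ep + c" using p ep c ENr real2 by (subst (asm) ennreal_inj) auto
      then show ?thesis using p ep c ENr real2 by simp
    qed
  qed
qed

lemma enn2ereal_diff_eq_diff_diff_of_add_eq:
  fixes KP KN EP EN U1 U2 :: ennreal
  assumes eq: "KP + EP + U2 = KN + EN + U1" and fin: "KN < \<infinity>" "EP < \<infinity>" "U2 < \<infinity>" "U1 < \<infinity>"
  shows "enn2ereal KP - enn2ereal KN = (enn2ereal U1 - enn2ereal U2) - (enn2ereal EP - enn2ereal EN)"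
proof -
  obtain kn where kn: "0 \<le> kn" "KN = ennreal kn" using fin(1) by (rule less_top_ennrealE)
  obtain ep where ep: "0 \<le> ep" "EP = ennreal ep" using fin(2) by (rule less_top_ennrealE)
  obtain un where un: "0 \<le> un" "U2 = ennreal un" using fin(3) by (rule less_top_ennrealE)
  obtain up where up: "0 \<le> up" "U1 = ennreal up" using fin(4) by (rule less_top_ennrealE)
  show ?thesis
  proof (cases EN rule: ennreal_cases)
    case top
    then have "KP + EP + U2 = top" using eq by simp
    then have "KP = top" using ep un by simp
    then show ?thesis using top kn ep un up by simp
  next
    case (real en)
    note ENr = real
    show ?thesis
    proof (cases KP rule: ennreal_cases)
      case top
      then have "KN + EN + U1 = top" using eq by simp
      then show ?thesis using kn ENr up by simp
    next
      case (real kp)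
      note real2 = real
      have "ennreal (kp + ep + un) = ennreal (kn + en + up)"
        using eq kn ep un up ENr real2 by simp
      then have "kp + ep + un = kn + en + up" using kn ep un up ENr real2 by (subst (asm) ennreal_inj) auto
      then show ?thesis using kn ep un up ENr real2 by simp
    qed
  qed
qed

lemma argmax_on_add_const:
  assumes "\<And>x. x \<in> S \<Longrightarrow> F1 x = F3 x + c" and "\<bar>c\<bar> \<noteq> \<infinity>"
  shows "argmax_on S F1 = argmax_on S F3"
proof -
  obtain r where r: "c = ereal r" using assms(2) by (cases c) auto
  have "F1 y \<le> F1 x \<longleftrightarrow> F3 y \<le> F3 x" if "x \<in> S" "y \<in> S" for x y
    using assms(1)[OF that(1)] assms(1)[OF that(2)] r by (cases "F3 x"; cases "F3 y") auto
  then show ?thesis unfolding argmax_on_def by blast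
qed

lemma argmin_on_const_minus_eq_argmax_on:
  assumes "\<And>x. x \<in> S \<Longrightarrow> F2 x = d - F3 x" and "\<bar>d\<bar> \<noteq> \<infinity>"
  shows "argmin_on S F2 = argmax_on S F3"
proof -
  obtain r where r: "d = ereal r" using assms(2) by (cases d) auto
  have "F2 x \<le> F2 y \<longleftrightarrow> F3 y \<le> F3 x" if "x \<in> S" "y \<in> S" for x y
    using assms(1)[OF that(1)] assms(1)[OF that(2)] r by (cases "F3 x"; cases "F3 y") auto
  then show ?thesis unfolding argmax_on_def argmin_on_def by blast
qed

lemma sum_mult_sum_commute:
  fixes c :: "nat \<Rightarrow> ennreal" and X :: "'b \<Rightarrow> nat \<Rightarrow> ennreal"
  shows "(\<Sum>a\<in>A. v a * (\<Sum>n\<in>I. c n * X a n)) = (\<Sum>n\<in>I. c n * (\<Sum>a\<in>A. v a * X a n))"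
  by (simp add: sum_distrib_left mult.left_commute sum.swap[of _ A])

subsection \<open>The multi-Bernoulli mixture and its candidates\<close>

locale mbm_setting =
  fixes H :: "'h set" and A :: "'h list set" and w :: "'h list \<Rightarrow> real"
    and f :: "'h \<Rightarrow> 'a::euclidean_space set \<Rightarrow> real" and N :: nat
  assumes bern_f: "\<And>h. h \<in> H \<Longrightarrow> is_bernoulli (f h)"
    and A_fin: "finite A"
    and A_sub: "\<And>a. a \<in> A \<Longrightarrow> length a = N \<and> set a \<subseteq> H"
    and w_nonneg: "\<And>a. a \<in> A \<Longrightarrow> 0 \<le> w a"
    and w_sum: "(\<Sum>a\<in>A. w a) = 1"
    and ent_f: "rfs_nn_integral (\<lambda>X. ennreal \<bar>mbm_density A w f N X * ln (mbm_density A w f N X)\<bar>) < \<infinity>"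
begin

abbreviation "fm \<equiv> mbm_density A w f N"

definition mb_candidates :: "('a set \<Rightarrow> real) list set" where
  "mb_candidates = {gs. length gs = N \<and> (\<forall>g\<in>set gs. is_bernoulli g)}"

definition assoc_density :: "'h list \<Rightarrow> (nat \<Rightarrow> 'a set) \<Rightarrow> real" where
  "assoc_density a Xs = (\<Prod>i<N. f (a ! i) (Xs i))"

definition sym_density :: "('a set \<Rightarrow> real) list \<Rightarrow> (nat \<Rightarrow> 'a set) \<Rightarrow> real" where
  "sym_density gs Xs = (\<Sum>\<pi> | \<pi> permutes {..<N}. \<Prod>i<N. (gs ! \<pi> i) (Xs i))"

text \<open>\<open>mix_points n\<close> and \<open>mb_points gs n\<close> are the densities of \<open>f\<close> and \<open>g\<close> at \<open>n\<close> distinct points.\<close>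

definition assoc_points :: "'h list \<Rightarrow> (nat \<Rightarrow> nat) \<Rightarrow> nat \<Rightarrow> (nat \<Rightarrow> 'a) \<Rightarrow> real" where
  "assoc_points a \<iota> n xs = (\<Prod>i<N. f (a ! i) (scatter \<iota> n xs i))"

definition mix_points :: "nat \<Rightarrow> (nat \<Rightarrow> 'a) \<Rightarrow> real" where
  "mix_points n xs = (\<Sum>a\<in>A. w a * (\<Sum>\<iota>\<in>injections n N. assoc_points a \<iota> n xs))"

definition mb_points :: "('a set \<Rightarrow> real) list \<Rightarrow> nat \<Rightarrow> (nat \<Rightarrow> 'a) \<Rightarrow> real" where
  "mb_points gs n xs = (\<Sum>\<iota>\<in>injections n N. \<Prod>j<N. (gs ! j) (scatter \<iota> n xs j))"

lemma is_bernoulli_assoc: "a \<in> A \<Longrightarrow> i < N \<Longrightarrow> is_bernoulli (f (a ! i))"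
  using A_sub[of a] by (intro bern_f) (auto simp: nth_mem subset_iff)

lemma is_bernoulli_candidate: "gs \<in> mb_candidates \<Longrightarrow> i < N \<Longrightarrow> is_bernoulli (gs ! i)"
  by (auto simp: mb_candidates_def)

lemma weight_le_1: "a \<in> A \<Longrightarrow> w a \<le> 1"
  using member_le_sum[of a A w] w_nonneg A_fin w_sum by simp

lemma assoc_points_nonneg: "a \<in> A \<Longrightarrow> 0 \<le> assoc_points a \<iota> n xs"
  unfolding assoc_points_def
  by (intro prod_nonneg) (use is_bernoulli_assoc is_bernoulli_nonneg in auto)

lemma mix_points_nonneg: "0 \<le> mix_points n xs"
  unfolding mix_points_def
  by (intro sum_nonneg mult_nonneg_nonneg) (use w_nonneg assoc_points_nonneg in auto)

lemma mb_points_nonneg: "gs \<in> mb_candidates \<Longrightarrow> 0 \<le> mb_points gs n xs"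
  unfolding mb_points_def
  by (intro sum_nonneg prod_nonneg) (use is_bernoulli_candidate is_bernoulli_nonneg in auto)

lemma mix_points_eq_0: "N < n \<Longrightarrow> mix_points n xs = 0"
  by (simp add: mix_points_def injections_empty)

lemma mb_points_eq_0: "N < n \<Longrightarrow> mb_points gs n xs = 0"
  by (simp add: mb_points_def injections_empty)

lemma weighted_assoc_points_le:
  assumes a: "a \<in> A" and \<iota>: "\<iota> \<in> injections n N"
  shows "w a * assoc_points a \<iota> n xs \<le> mix_points n xs"
proof -
  have "w a * assoc_points a \<iota> n xs \<le> w a * (\<Sum>\<iota>\<in>injections n N. assoc_points a \<iota> n xs)"
    using a \<iota> w_nonneg[OF a] assoc_points_nonneg[OF a] by (intro mult_left_mono member_le_sum) auto
  also have "\<dots> \<le> mix_points n xs"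
    unfolding mix_points_def using a A_fin w_nonneg assoc_points_nonneg
    by (intro member_le_sum[of a A "\<lambda>a. w a * (\<Sum>\<iota>\<in>injections n N. assoc_points a \<iota> n xs)"])
       (auto intro!: mult_nonneg_nonneg sum_nonneg)
  finally show ?thesis .
qed

lemma AE_mbm_density_eq_mix_points:
  "AE xs in lborel_tuples n. fm (xs ` {..<n}) = mix_points n xs"
  using AE_PiM_lborel_inj_on[of n]
proof eventually_elim
  fix xs :: "nat \<Rightarrow> 'a" assume inj: "inj_on xs {..<n}"
  have "(\<Sum>Xs\<in>disjoint_tuples N (xs ` {..<n}). \<Prod>i<N. f (a ! i) (Xs i))
      = (\<Sum>\<iota>\<in>injections n N. assoc_points a \<iota> n xs)" if a: "a \<in> A" for a
    unfolding assoc_points_def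
    by (rule sum_disjoint_tuples_eq_sum_injections[OF inj])
       (use is_bernoulli_assoc[OF a] is_bernoulli_eq_0 in auto)
  then show "fm (xs ` {..<n}) = mix_points n xs"
    by (simp add: mbm_density_def mix_points_def)
qed

lemma AE_mb_density_eq_mb_points:
  assumes gs: "gs \<in> mb_candidates"
  shows "AE xs in lborel_tuples n. mb_density gs (xs ` {..<n}) = mb_points gs n xs"
  using AE_PiM_lborel_inj_on[of n]
proof eventually_elim
  fix xs :: "nat \<Rightarrow> 'a" assume inj: "inj_on xs {..<n}"
  have len: "length gs = N" using gs by (simp add: mb_candidates_def)
  show "mb_density gs (xs ` {..<n}) = mb_points gs n xs"
    unfolding mb_density_def mb_points_def len
    by (rule sum_disjoint_tuples_eq_sum_injections[OF inj])
       (use is_bernoulli_candidate[OF gs] is_bernoulli_eq_0 in auto)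
qed

lemma sym_density_scatter:
  assumes "gs \<in> mb_candidates" and \<iota>: "\<iota> \<in> injections n N"
  shows "sym_density gs (scatter \<iota> n xs) = fact (N - n) * mb_points gs n xs"
  unfolding sym_density_def mb_points_def using sum_permutes_scatter[OF \<iota>, of "\<lambda>j. gs ! j" xs] by simp

lemma assoc_density_eq_0:
  assumes a: "a \<in> A" and "\<exists>i<N. finite (Xs i) \<and> 2 \<le> card (Xs i)"
  shows "assoc_density a Xs = 0"
proof -
  obtain i where i: "i < N" "finite (Xs i)" "2 \<le> card (Xs i)" using assms(2) by blast
  then have "f (a ! i) (Xs i) = 0" using is_bernoulli_eq_0[OF is_bernoulli_assoc[OF a]] by blast
  then show ?thesis unfolding assoc_density_def using i(1) by (intro prod_zero) auto
qed

lemma borel_measurable_assoc_points: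
  "a \<in> A \<Longrightarrow> assoc_points a \<iota> n \<in> borel_measurable (lborel_tuples n)"
  unfolding assoc_points_def[abs_def]
  by (intro borel_measurable_prod borel_measurable_is_bernoulli_scatter is_bernoulli_assoc) auto

lemma borel_measurable_mix_points: "mix_points n \<in> borel_measurable (lborel_tuples n)"
  unfolding mix_points_def[abs_def]
  by (intro borel_measurable_sum borel_measurable_times borel_measurable_const
      borel_measurable_assoc_points)

lemma borel_measurable_mb_points:
  "gs \<in> mb_candidates \<Longrightarrow> mb_points gs n \<in> borel_measurable (lborel_tuples n)"
  unfolding mb_points_def[abs_def]
  by (intro borel_measurable_sum borel_measurable_prod borel_measurable_is_bernoulli_scatter
      is_bernoulli_candidate) auto

lemma borel_measurable_mix_points_entropy:
  "(\<lambda>xs. \<bar>mix_points n xs * ln (mix_points n xs)\<bar>) \<in> borel_measurable (lborel_tuples n)"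
  using borel_measurable_mix_points by measurable

lemma borel_measurable_assoc_density_singletons_on:
  "a \<in> A \<Longrightarrow> (\<lambda>x. assoc_density a (singletons_on S x)) \<in> borel_measurable (PiM S (\<lambda>_. lborel))"
  unfolding assoc_density_def
  by (intro borel_measurable_prod borel_measurable_is_bernoulli_singletons_on is_bernoulli_assoc) auto

lemma borel_measurable_sym_density_singletons_on:
  "gs \<in> mb_candidates \<Longrightarrow>
     (\<lambda>x. sym_density gs (singletons_on S x)) \<in> borel_measurable (PiM S (\<lambda>_. lborel))"
  unfolding sym_density_def
proof (intro borel_measurable_sum borel_measurable_prod borel_measurable_is_bernoulli_singletons_on
    is_bernoulli_candidate)
  fix \<pi> i assume "\<pi> \<in> {\<pi>. \<pi> permutes {..<N}}" "i \<in> {..<N}"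
  then show "\<pi> i < N" by (metis lessThan_iff mem_Collect_eq permutes_in_image)
qed

lemma multi_nn_integral_assoc_sym:
  fixes \<psi> :: "real \<Rightarrow> real \<Rightarrow> ennreal"
  assumes a: "a \<in> A" and gs: "gs \<in> mb_candidates" and \<psi>0: "\<And>s. \<psi> 0 s = 0"
    and \<psi>_meas: "\<And>(M :: (nat \<Rightarrow> 'a) measure) F S. F \<in> borel_measurable M \<Longrightarrow> S \<in> borel_measurable M
                    \<Longrightarrow> (\<lambda>x. \<psi> (F x) (S x)) \<in> borel_measurable M"
  shows "multi_nn_integral N (\<lambda>Xs. \<psi> (assoc_density a Xs) (sym_density gs Xs))
      = (\<Sum>n\<in>{..N}. ennreal (1 / fact n) * (\<Sum>\<iota>\<in>injections n N.
           \<integral>\<^sup>+xs. \<psi> (assoc_points a \<iota> n xs) (fact (N - n) * mb_points gs n xs) \<partial>lborel_tuples n))"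
proof -
  have "multi_nn_integral N (\<lambda>Xs. \<psi> (assoc_density a Xs) (sym_density gs Xs))
      = (\<Sum>n\<in>{..N}. ennreal (1 / fact n) * (\<Sum>\<iota>\<in>injections n N.
           \<integral>\<^sup>+xs. \<psi> (assoc_density a (scatter \<iota> n xs)) (sym_density gs (scatter \<iota> n xs)) \<partial>lborel_tuples n))"
    using assoc_density_eq_0[OF a] \<psi>0
    by (intro multi_nn_integral_scatter \<psi>_meas borel_measurable_assoc_density_singletons_on[OF a]
        borel_measurable_sym_density_singletons_on[OF gs]) auto
  then show ?thesis
    by (simp add: sym_density_scatter[OF gs] assoc_points_def assoc_density_def)
qed

lemma rfs_nn_integral_mix_mb:
  fixes \<phi> :: "real \<Rightarrow> real \<Rightarrow> ennreal"
  assumes gs: "gs \<in> mb_candidates" and \<phi>0: "\<phi> 0 0 = 0"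
  shows "rfs_nn_integral (\<lambda>X. \<phi> (fm X) (mb_density gs X))
      = (\<Sum>n\<in>{..N}. ennreal (1 / fact n) *
           (\<integral>\<^sup>+xs. \<phi> (mix_points n xs) (mb_points gs n xs) \<partial>lborel_tuples n))"
proof (rule rfs_nn_integral_AE_eq_finite_sum)
  show "AE xs in lborel_tuples n. \<phi> (fm (xs ` {..<n})) (mb_density gs (xs ` {..<n}))
          = \<phi> (mix_points n xs) (mb_points gs n xs)" for n
    using AE_mbm_density_eq_mix_points[of n] AE_mb_density_eq_mb_points[OF gs, of n]
    by eventually_elim simp
qed (use \<phi>0 in \<open>simp add: mix_points_eq_0 mb_points_eq_0\<close>)

lemma rfs_nn_integral_mix:
  fixes \<phi> :: "real \<Rightarrow> ennreal"
  assumes \<phi>0: "\<phi> 0 = 0"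
  shows "rfs_nn_integral (\<lambda>X. \<phi> (fm X))
      = (\<Sum>n\<in>{..N}. ennreal (1 / fact n) * (\<integral>\<^sup>+xs. \<phi> (mix_points n xs) \<partial>lborel_tuples n))"
proof (rule rfs_nn_integral_AE_eq_finite_sum)
  show "AE xs in lborel_tuples n. \<phi> (fm (xs ` {..<n})) = \<phi> (mix_points n xs)" for n
    using AE_mbm_density_eq_mix_points[of n] by eventually_elim simp
qed (use \<phi>0 in \<open>simp add: mix_points_eq_0\<close>)

lemma nn_integral_mb_points_less_top:
  assumes gs: "gs \<in> mb_candidates"
  shows "(\<integral>\<^sup>+xs. ennreal (mb_points gs n xs) \<partial>lborel_tuples n) < \<infinity>"
proof -
  have "(\<integral>\<^sup>+xs. ennreal (mb_points gs n xs) \<partial>lborel_tuples n)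
      = (\<integral>\<^sup>+xs. (\<Sum>\<iota>\<in>injections n N. ennreal (\<Prod>j<N. (gs ! j) (scatter \<iota> n xs j))) \<partial>lborel_tuples n)"
    unfolding mb_points_def
    by (intro nn_integral_cong sum_ennreal[symmetric] prod_nonneg)
       (use is_bernoulli_candidate[OF gs] is_bernoulli_nonneg in auto)
  also have "\<dots> = (\<Sum>\<iota>\<in>injections n N.
                     \<integral>\<^sup>+xs. ennreal (\<Prod>j<N. (gs ! j) (scatter \<iota> n xs j)) \<partial>lborel_tuples n)"
    by (intro nn_integral_sum measurable_compose[OF _ measurable_ennreal] borel_measurable_prod
        borel_measurable_is_bernoulli_scatter is_bernoulli_candidate[OF gs]) auto
  also have "\<dots> \<le> (\<Sum>\<iota>\<in>injections n N. 1)"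
    by (intro sum_mono nn_integral_prod_bernoulli_scatter_le_1) (use is_bernoulli_candidate[OF gs] in auto)
  also have "\<dots> < \<infinity>" by (simp add: of_nat_less_top)
  finally show ?thesis .
qed

lemma nn_integral_mix_points_less_top: "(\<integral>\<^sup>+xs. ennreal (mix_points n xs) \<partial>lborel_tuples n) < \<infinity>"
proof -
  have "ennreal (mix_points n xs) \<le> (\<Sum>a\<in>A. \<Sum>\<iota>\<in>injections n N. ennreal (assoc_points a \<iota> n xs))" for xs
  proof -
    have "mix_points n xs \<le> (\<Sum>a\<in>A. \<Sum>\<iota>\<in>injections n N. assoc_points a \<iota> n xs)"
      unfolding mix_points_def using weight_le_1 w_nonneg assoc_points_nonneg
      by (intro sum_mono mult_left_le_one_le sum_nonneg) auto
    then show ?thesis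
      using assoc_points_nonneg by (simp add: sum_ennreal sum_nonneg ennreal_leI)
  qed
  then have "(\<integral>\<^sup>+xs. ennreal (mix_points n xs) \<partial>lborel_tuples n)
      \<le> (\<Sum>a\<in>A. \<Sum>\<iota>\<in>injections n N. \<integral>\<^sup>+xs. ennreal (assoc_points a \<iota> n xs) \<partial>lborel_tuples n)"
    using borel_measurable_assoc_points by (simp add: nn_integral_mono nn_integral_sum[symmetric])
  also have "\<dots> \<le> (\<Sum>a\<in>A. \<Sum>\<iota>\<in>injections n N. 1)"
    unfolding assoc_points_def
    by (intro sum_mono nn_integral_prod_bernoulli_scatter_le_1) (auto intro: is_bernoulli_assoc)
  also have "\<dots> < \<infinity>" by (simp add: of_nat_less_top ennreal_mult_less_top)
  finally show ?thesis .
qed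

lemma nn_integral_mix_points_entropy_less_top:
  "(\<integral>\<^sup>+xs. ennreal \<bar>mix_points n xs * ln (mix_points n xs)\<bar> \<partial>lborel_tuples n) < \<infinity>"
proof (cases "n \<le> N")
  case True
  have "(\<Sum>n\<in>{..N}. ennreal (1 / fact n) *
          (\<integral>\<^sup>+xs. ennreal \<bar>mix_points n xs * ln (mix_points n xs)\<bar> \<partial>lborel_tuples n)) < \<infinity>"
    using ent_f rfs_nn_integral_mix[of "\<lambda>x. ennreal \<bar>x * ln x\<bar>"] by simp
  then have "ennreal (1 / fact n) *
      (\<integral>\<^sup>+xs. ennreal \<bar>mix_points n xs * ln (mix_points n xs)\<bar> \<partial>lborel_tuples n) < \<infinity>"
    using True by (simp add: ennreal_sum_less_top)
  then show ?thesis by (auto simp: ennreal_mult_less_top)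
qed (simp add: mix_points_eq_0)

lemma nn_integral_cross_balance:
  fixes n :: nat
  assumes gs: "gs \<in> mb_candidates"
  defines "K \<equiv> fact (N - n) :: real"
  shows "(\<Sum>a\<in>A. ennreal (w a) * (\<Sum>\<iota>\<in>injections n N.
            \<integral>\<^sup>+xs. e2ennreal (xlogy (assoc_points a \<iota> n xs) (K * mb_points gs n xs)) \<partial>lborel_tuples n))
       + (\<integral>\<^sup>+xs. e2ennreal (- xlogy (mix_points n xs) (mb_points gs n xs)) \<partial>lborel_tuples n)
     = (\<Sum>a\<in>A. ennreal (w a) * (\<Sum>\<iota>\<in>injections n N.
            \<integral>\<^sup>+xs. e2ennreal (- xlogy (assoc_points a \<iota> n xs) (K * mb_points gs n xs)) \<partial>lborel_tuples n))
       + (\<integral>\<^sup>+xs. e2ennreal (xlogy (mix_points n xs) (mb_points gs n xs)) \<partial>lborel_tuples n)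
       + (\<integral>\<^sup>+xs. ennreal (ln K * mix_points n xs) \<partial>lborel_tuples n)"
    (is "?L = ?R")
proof -
  have mK: "(\<lambda>xs. K * mb_points gs n xs) \<in> borel_measurable (lborel_tuples n)"
    using borel_measurable_mb_points[OF gs] by simp
  note m = borel_measurable_e2ennreal_xlogy_kl_term(1,2)
  have "?L = (\<integral>\<^sup>+xs. (\<Sum>a\<in>A. ennreal (w a) * (\<Sum>\<iota>\<in>injections n N.
                  e2ennreal (xlogy (assoc_points a \<iota> n xs) (K * mb_points gs n xs))))
              + e2ennreal (- xlogy (mix_points n xs) (mb_points gs n xs)) \<partial>lborel_tuples n)"
    using m[OF borel_measurable_assoc_points mK]
      m[OF borel_measurable_mix_points borel_measurable_mb_points[OF gs]]
    by (simp add: nn_integral_add nn_integral_sum nn_integral_cmult)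
  also have "\<dots> = (\<integral>\<^sup>+xs. (\<Sum>a\<in>A. ennreal (w a) * (\<Sum>\<iota>\<in>injections n N.
                  e2ennreal (- xlogy (assoc_points a \<iota> n xs) (K * mb_points gs n xs))))
              + e2ennreal (xlogy (mix_points n xs) (mb_points gs n xs))
              + ennreal (ln K * mix_points n xs) \<partial>lborel_tuples n)"
    unfolding K_def
    by (intro nn_integral_cong xlogy_mixture_balance[OF A_fin finite_injections])
       (use w_nonneg assoc_points_nonneg mb_points_nonneg[OF gs] fact_ge_1 in \<open>auto simp: mix_points_def\<close>)
  also have "\<dots> = ?R"
    using m[OF borel_measurable_assoc_points mK]
      m[OF borel_measurable_mix_points borel_measurable_mb_points[OF gs]]
      borel_measurable_mix_points
    by (simp add: nn_integral_add nn_integral_sum nn_integral_cmult)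
  finally show ?thesis .
qed

lemma nn_integral_kl_balance:
  assumes gs: "gs \<in> mb_candidates"
  shows "(\<integral>\<^sup>+xs. e2ennreal (kl_term (mix_points n xs) (mb_points gs n xs)) \<partial>lborel_tuples n)
       + (\<integral>\<^sup>+xs. e2ennreal (xlogy (mix_points n xs) (mb_points gs n xs)) \<partial>lborel_tuples n)
       + (\<integral>\<^sup>+xs. e2ennreal (- xlogy (mix_points n xs) (mix_points n xs)) \<partial>lborel_tuples n)
     = (\<integral>\<^sup>+xs. e2ennreal (- kl_term (mix_points n xs) (mb_points gs n xs)) \<partial>lborel_tuples n)
       + (\<integral>\<^sup>+xs. e2ennreal (- xlogy (mix_points n xs) (mb_points gs n xs)) \<partial>lborel_tuples n)
       + (\<integral>\<^sup>+xs. e2ennreal (xlogy (mix_points n xs) (mix_points n xs)) \<partial>lborel_tuples n)"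
proof -
  note m1 = borel_measurable_e2ennreal_xlogy_kl_term[OF borel_measurable_mix_points
      borel_measurable_mb_points[OF gs], of n]
  note m2 = borel_measurable_e2ennreal_xlogy_kl_term[OF borel_measurable_mix_points
      borel_measurable_mix_points, of n]
  have "(\<integral>\<^sup>+xs. e2ennreal (kl_term (mix_points n xs) (mb_points gs n xs))
          + e2ennreal (xlogy (mix_points n xs) (mb_points gs n xs))
          + e2ennreal (- xlogy (mix_points n xs) (mix_points n xs)) \<partial>lborel_tuples n)
      = (\<integral>\<^sup>+xs. e2ennreal (- kl_term (mix_points n xs) (mb_points gs n xs))
          + e2ennreal (- xlogy (mix_points n xs) (mb_points gs n xs))
          + e2ennreal (xlogy (mix_points n xs) (mix_points n xs)) \<partial>lborel_tuples n)"
    by (intro nn_integral_cong e2ennreal_kl_term_xlogy_balance mix_points_nonneg mb_points_nonneg[OF gs])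
  then show ?thesis using m1 m2 by (simp add: nn_integral_add)
qed

text \<open>
  Positive and negative parts of the labelled objective of association \<open>a\<close>, of \<open>\<integral> f log g\<close>,
  of \<open>KL(f \<parallel> g)\<close> and of \<open>\<integral> f log f\<close>; \<open>log_fact_const\<close> is the constant by which the labelled
  objective exceeds \<open>\<integral> f log g\<close>.
\<close>

definition cross_pos :: "('a set \<Rightarrow> real) list \<Rightarrow> 'h list \<Rightarrow> ennreal" where
  "cross_pos gs a = multi_nn_integral N (\<lambda>Xs. e2ennreal (xlogy (assoc_density a Xs) (sym_density gs Xs)))"

definition cross_neg :: "('a set \<Rightarrow> real) list \<Rightarrow> 'h list \<Rightarrow> ennreal" where
  "cross_neg gs a = multi_nn_integral N (\<lambda>Xs. e2ennreal (- xlogy (assoc_density a Xs) (sym_density gs Xs)))"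

definition ent_pos :: "('a set \<Rightarrow> real) list \<Rightarrow> ennreal" where
  "ent_pos gs = rfs_nn_integral (\<lambda>X. e2ennreal (xlogy (fm X) (mb_density gs X)))"

definition ent_neg :: "('a set \<Rightarrow> real) list \<Rightarrow> ennreal" where
  "ent_neg gs = rfs_nn_integral (\<lambda>X. e2ennreal (- xlogy (fm X) (mb_density gs X)))"

definition kl_pos :: "('a set \<Rightarrow> real) list \<Rightarrow> ennreal" where
  "kl_pos gs = rfs_nn_integral (\<lambda>X. e2ennreal (kl_term (fm X) (mb_density gs X)))"

definition kl_neg :: "('a set \<Rightarrow> real) list \<Rightarrow> ennreal" where
  "kl_neg gs = rfs_nn_integral (\<lambda>X. e2ennreal (- kl_term (fm X) (mb_density gs X)))"

definition self_pos :: ennreal where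
  "self_pos = rfs_nn_integral (\<lambda>X. e2ennreal (xlogy (fm X) (fm X)))"

definition self_neg :: ennreal where
  "self_neg = rfs_nn_integral (\<lambda>X. e2ennreal (- xlogy (fm X) (fm X)))"

definition log_fact_const :: ennreal where
  "log_fact_const = (\<Sum>n\<in>{..N}. ennreal (1 / fact n) *
     (\<integral>\<^sup>+xs. ennreal (ln (fact (N - n)) * mix_points n xs) \<partial>lborel_tuples n))"

lemma cross_pos_eq:
  "a \<in> A \<Longrightarrow> gs \<in> mb_candidates \<Longrightarrow> cross_pos gs a = (\<Sum>n\<in>{..N}. ennreal (1 / fact n) *
     (\<Sum>\<iota>\<in>injections n N. \<integral>\<^sup>+xs. e2ennreal (xlogy (assoc_points a \<iota> n xs)
        (fact (N - n) * mb_points gs n xs)) \<partial>lborel_tuples n))"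
  unfolding cross_pos_def
  by (rule multi_nn_integral_assoc_sym)
     (auto simp: xlogy_def intro: borel_measurable_e2ennreal_xlogy_kl_term)

lemma cross_neg_eq:
  "a \<in> A \<Longrightarrow> gs \<in> mb_candidates \<Longrightarrow> cross_neg gs a = (\<Sum>n\<in>{..N}. ennreal (1 / fact n) *
     (\<Sum>\<iota>\<in>injections n N. \<integral>\<^sup>+xs. e2ennreal (- xlogy (assoc_points a \<iota> n xs)
        (fact (N - n) * mb_points gs n xs)) \<partial>lborel_tuples n))"
  unfolding cross_neg_def
  by (rule multi_nn_integral_assoc_sym[where \<psi> = "\<lambda>p s. e2ennreal (- xlogy p s)"])
     (auto simp: xlogy_def intro: borel_measurable_e2ennreal_xlogy_kl_term)

lemma ent_pos_eq:
  "gs \<in> mb_candidates \<Longrightarrow> ent_pos gs = (\<Sum>n\<in>{..N}. ennreal (1 / fact n) *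
     (\<integral>\<^sup>+xs. e2ennreal (xlogy (mix_points n xs) (mb_points gs n xs)) \<partial>lborel_tuples n))"
  unfolding ent_pos_def by (rule rfs_nn_integral_mix_mb) (simp_all add: xlogy_def)

lemma ent_neg_eq:
  "gs \<in> mb_candidates \<Longrightarrow> ent_neg gs = (\<Sum>n\<in>{..N}. ennreal (1 / fact n) *
     (\<integral>\<^sup>+xs. e2ennreal (- xlogy (mix_points n xs) (mb_points gs n xs)) \<partial>lborel_tuples n))"
  unfolding ent_neg_def
  by (rule rfs_nn_integral_mix_mb[where \<phi> = "\<lambda>p s. e2ennreal (- xlogy p s)"]) (simp_all add: xlogy_def)

lemma kl_pos_eq:
  "gs \<in> mb_candidates \<Longrightarrow> kl_pos gs = (\<Sum>n\<in>{..N}. ennreal (1 / fact n) *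
     (\<integral>\<^sup>+xs. e2ennreal (kl_term (mix_points n xs) (mb_points gs n xs)) \<partial>lborel_tuples n))"
  unfolding kl_pos_def by (rule rfs_nn_integral_mix_mb) (simp_all add: kl_term_def)

lemma kl_neg_eq:
  "gs \<in> mb_candidates \<Longrightarrow> kl_neg gs = (\<Sum>n\<in>{..N}. ennreal (1 / fact n) *
     (\<integral>\<^sup>+xs. e2ennreal (- kl_term (mix_points n xs) (mb_points gs n xs)) \<partial>lborel_tuples n))"
  unfolding kl_neg_def
  by (rule rfs_nn_integral_mix_mb[where \<phi> = "\<lambda>p s. e2ennreal (- kl_term p s)"]) (simp_all add: kl_term_def)

lemma self_pos_eq:
  "self_pos = (\<Sum>n\<in>{..N}. ennreal (1 / fact n) *
     (\<integral>\<^sup>+xs. e2ennreal (xlogy (mix_points n xs) (mix_points n xs)) \<partial>lborel_tuples n))"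
  unfolding self_pos_def
  by (rule rfs_nn_integral_mix[where \<phi> = "\<lambda>p. e2ennreal (xlogy p p)"]) (simp add: xlogy_def)

lemma self_neg_eq:
  "self_neg = (\<Sum>n\<in>{..N}. ennreal (1 / fact n) *
     (\<integral>\<^sup>+xs. e2ennreal (- xlogy (mix_points n xs) (mix_points n xs)) \<partial>lborel_tuples n))"
  unfolding self_neg_def
  by (rule rfs_nn_integral_mix[where \<phi> = "\<lambda>p. e2ennreal (- xlogy p p)"]) (simp add: xlogy_def)

lemma cross_entropy_balance:
  assumes gs: "gs \<in> mb_candidates"
  shows "(\<Sum>a\<in>A. ennreal (w a) * cross_pos gs a) + ent_neg gs
       = (\<Sum>a\<in>A. ennreal (w a) * cross_neg gs a) + ent_pos gs + log_fact_const"
proof -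
  define c where "c n = ennreal (1 / fact n)" for n :: nat
  define P where "P a n = (\<Sum>\<iota>\<in>injections n N. \<integral>\<^sup>+xs. e2ennreal (xlogy (assoc_points a \<iota> n xs)
      (fact (N - n) * mb_points gs n xs)) \<partial>lborel_tuples n)" for a n
  define Q where "Q a n = (\<Sum>\<iota>\<in>injections n N. \<integral>\<^sup>+xs. e2ennreal (- xlogy (assoc_points a \<iota> n xs)
      (fact (N - n) * mb_points gs n xs)) \<partial>lborel_tuples n)" for a n
  define ep where
    "ep n = (\<integral>\<^sup>+xs. e2ennreal (xlogy (mix_points n xs) (mb_points gs n xs)) \<partial>lborel_tuples n)" for n
  define en where
    "en n = (\<integral>\<^sup>+xs. e2ennreal (- xlogy (mix_points n xs) (mb_points gs n xs)) \<partial>lborel_tuples n)" for n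
  define k where "k n = (\<integral>\<^sup>+xs. ennreal (ln (fact (N - n)) * mix_points n xs) \<partial>lborel_tuples n)" for n
  have "(\<Sum>a\<in>A. ennreal (w a) * cross_pos gs a) = (\<Sum>n\<in>{..N}. c n * (\<Sum>a\<in>A. ennreal (w a) * P a n))"
    "(\<Sum>a\<in>A. ennreal (w a) * cross_neg gs a) = (\<Sum>n\<in>{..N}. c n * (\<Sum>a\<in>A. ennreal (w a) * Q a n))"
    by (simp_all add: cross_pos_eq cross_neg_eq gs c_def P_def Q_def sum_mult_sum_commute)
  moreover have "ent_pos gs = (\<Sum>n\<in>{..N}. c n * ep n)" "ent_neg gs = (\<Sum>n\<in>{..N}. c n * en n)"
      "log_fact_const = (\<Sum>n\<in>{..N}. c n * k n)"
    by (simp_all add: ent_pos_eq ent_neg_eq gs log_fact_const_def c_def ep_def en_def k_def)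
  moreover have "(\<Sum>a\<in>A. ennreal (w a) * P a n) + en n = (\<Sum>a\<in>A. ennreal (w a) * Q a n) + ep n + k n" for n
    unfolding P_def Q_def ep_def en_def k_def by (rule nn_integral_cross_balance[OF gs])
  ultimately show ?thesis
    by (simp add: sum.distrib[symmetric] distrib_left[symmetric])
qed

lemma kl_balance:
  assumes gs: "gs \<in> mb_candidates"
  shows "kl_pos gs + ent_pos gs + self_neg = kl_neg gs + ent_neg gs + self_pos"
  by (simp add: kl_pos_eq kl_neg_eq ent_pos_eq ent_neg_eq self_pos_eq self_neg_eq gs
      sum.distrib[symmetric] distrib_left[symmetric] nn_integral_kl_balance)

lemma nn_integral_entropy_bound_less_top:
  assumes gs: "gs \<in> mb_candidates" and "0 \<le> \<alpha>" "0 \<le> \<beta>" "0 \<le> \<gamma>"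
  shows "(\<integral>\<^sup>+xs. ennreal (\<alpha> * \<bar>mix_points n xs * ln (mix_points n xs)\<bar> + \<beta> * mix_points n xs
            + \<gamma> * mb_points gs n xs) \<partial>lborel_tuples n) < \<infinity>"
  using assms mix_points_nonneg mb_points_nonneg[OF gs] nn_integral_mix_points_entropy_less_top
    nn_integral_mix_points_less_top nn_integral_mb_points_less_top[OF gs]
  by (intro nn_integral_lincomb3_less_top borel_measurable_mix_points_entropy
      borel_measurable_mix_points borel_measurable_mb_points) auto

lemma cross_pos_less_top:
  assumes a: "a \<in> A" and wa: "0 < w a" and gs: "gs \<in> mb_candidates"
  shows "cross_pos gs a < \<infinity>"
proof -
  have "(\<integral>\<^sup>+xs. e2ennreal (xlogy (assoc_points a \<iota> n xs) (fact (N - n) * mb_points gs n xs))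
           \<partial>lborel_tuples n) < \<infinity>" if \<iota>: "\<iota> \<in> injections n N" for \<iota> n
  proof (rule le_less_trans)
    show "(\<integral>\<^sup>+xs. e2ennreal (xlogy (assoc_points a \<iota> n xs) (fact (N - n) * mb_points gs n xs))
            \<partial>lborel_tuples n)
        \<le> (\<integral>\<^sup>+xs. ennreal (1 / w a * \<bar>mix_points n xs * ln (mix_points n xs)\<bar>
              + ln (1 / w a) / w a * mix_points n xs + fact (N - n) * mb_points gs n xs) \<partial>lborel_tuples n)"
      using wa weight_le_1[OF a] assoc_points_nonneg[OF a] weighted_assoc_points_le[OF a \<iota>]
        mb_points_nonneg[OF gs]
      by (intro nn_integral_mono e2ennreal_xlogy_le_dominated) auto
  qed (use wa weight_le_1[OF a] in \<open>intro nn_integral_entropy_bound_less_top[OF gs], auto\<close>)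
  then show ?thesis unfolding cross_pos_eq[OF a gs] by (simp add: ennreal_mult_less_top)
qed

lemma ent_pos_less_top:
  assumes gs: "gs \<in> mb_candidates"
  shows "ent_pos gs < \<infinity>"
proof -
  have "(\<integral>\<^sup>+xs. e2ennreal (xlogy (mix_points n xs) (mb_points gs n xs)) \<partial>lborel_tuples n) < \<infinity>" for n
  proof (rule le_less_trans)
    show "(\<integral>\<^sup>+xs. e2ennreal (xlogy (mix_points n xs) (mb_points gs n xs)) \<partial>lborel_tuples n)
        \<le> (\<integral>\<^sup>+xs. ennreal (1 * \<bar>mix_points n xs * ln (mix_points n xs)\<bar>
              + 0 * mix_points n xs + 1 * mb_points gs n xs) \<partial>lborel_tuples n)"
      using e2ennreal_xlogy_le_dominated[of 1 "mix_points n _" "mix_points n _" "mb_points gs n _"]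
        mix_points_nonneg mb_points_nonneg[OF gs]
      by (intro nn_integral_mono) simp
  qed (intro nn_integral_entropy_bound_less_top[OF gs], auto)
  then show ?thesis unfolding ent_pos_eq[OF gs] by (simp add: ennreal_mult_less_top)
qed

lemma log_fact_const_less_top: "log_fact_const < \<infinity>"
proof -
  have "(\<integral>\<^sup>+xs. ennreal (ln (fact (N - n)) * mix_points n xs) \<partial>lborel_tuples n)
      = ennreal (ln (fact (N - n))) * (\<integral>\<^sup>+xs. ennreal (mix_points n xs) \<partial>lborel_tuples n)" for n
    using borel_measurable_mix_points mix_points_nonneg fact_ge_1[of "N - n", where 'a=real]
    by (simp add: ennreal_mult nn_integral_cmult)
  then show ?thesis
    using nn_integral_mix_points_less_top by (simp add: log_fact_const_def ennreal_mult_less_top)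
qed

lemma kl_neg_less_top:
  assumes gs: "gs \<in> mb_candidates"
  shows "kl_neg gs < \<infinity>"
proof -
  have "(\<integral>\<^sup>+xs. e2ennreal (- kl_term (mix_points n xs) (mb_points gs n xs)) \<partial>lborel_tuples n)
      \<le> (\<integral>\<^sup>+xs. ennreal (mb_points gs n xs) \<partial>lborel_tuples n)" for n
    by (intro nn_integral_mono e2ennreal_uminus_kl_term_le mix_points_nonneg mb_points_nonneg[OF gs])
  then have "(\<integral>\<^sup>+xs. e2ennreal (- kl_term (mix_points n xs) (mb_points gs n xs)) \<partial>lborel_tuples n) < \<infinity>"
    for n using nn_integral_mb_points_less_top[OF gs] by (rule le_less_trans)
  then show ?thesis unfolding kl_neg_eq[OF gs] by (simp add: ennreal_mult_less_top)
qed

lemma self_pos_less_top: "self_pos < \<infinity>" and self_neg_less_top: "self_neg < \<infinity>"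
proof -
  have "(\<integral>\<^sup>+xs. e2ennreal (xlogy (mix_points n xs) (mix_points n xs)) \<partial>lborel_tuples n)
      \<le> (\<integral>\<^sup>+xs. ennreal \<bar>mix_points n xs * ln (mix_points n xs)\<bar> \<partial>lborel_tuples n)"
    "(\<integral>\<^sup>+xs. e2ennreal (- xlogy (mix_points n xs) (mix_points n xs)) \<partial>lborel_tuples n)
      \<le> (\<integral>\<^sup>+xs. ennreal \<bar>mix_points n xs * ln (mix_points n xs)\<bar> \<partial>lborel_tuples n)" for n
    by (intro nn_integral_mono e2ennreal_xlogy_self_le mix_points_nonneg)+
  then show "self_pos < \<infinity>" "self_neg < \<infinity>"
    unfolding self_pos_eq self_neg_eq using nn_integral_mix_points_entropy_less_top
    by (auto simp: ennreal_mult_less_top intro: le_less_trans)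
qed

lemma weighted_cross_pos_less_top:
  assumes a: "a \<in> A" and gs: "gs \<in> mb_candidates"
  shows "ennreal (w a) * cross_pos gs a < \<infinity>"
  using cross_pos_less_top[OF a _ gs] w_nonneg[OF a]
  by (cases "w a = 0") (auto simp: ennreal_mult_less_top)

lemma labelled_objective_eq:
  assumes gs: "gs \<in> mb_candidates"
  shows "(\<Sum>a\<in>A. ereal (w a) * multi_integral N (\<lambda>Xs. xlogy (assoc_density a Xs) (sym_density gs Xs)))
       = rfs_integral (\<lambda>X. xlogy (fm X) (mb_density gs X)) + enn2ereal log_fact_const"
proof -
  have "(\<Sum>a\<in>A. ereal (w a) * multi_integral N (\<lambda>Xs. xlogy (assoc_density a Xs) (sym_density gs Xs)))
      = (\<Sum>a\<in>A. enn2ereal (ennreal (w a) * cross_pos gs a) - enn2ereal (ennreal (w a) * cross_neg gs a))"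
    unfolding multi_integral_def cross_pos_def[symmetric] cross_neg_def[symmetric]
    by (intro sum.cong refl ereal_mult_enn2ereal_diff w_nonneg weighted_cross_pos_less_top gs)
  also have "\<dots> = enn2ereal (\<Sum>a\<in>A. ennreal (w a) * cross_pos gs a)
                  - enn2ereal (\<Sum>a\<in>A. ennreal (w a) * cross_neg gs a)"
    by (intro sum_enn2ereal_diff A_fin weighted_cross_pos_less_top gs)
  also have "\<dots> = (enn2ereal (ent_pos gs) - enn2ereal (ent_neg gs)) + enn2ereal log_fact_const"
    using weighted_cross_pos_less_top[OF _ gs] A_fin ent_pos_less_top[OF gs] log_fact_const_less_top
    by (intro enn2ereal_diff_eq_diff_add_of_add_eq[OF cross_entropy_balance[OF gs]])
       (auto simp: ennreal_sum_less_top)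
  finally show ?thesis by (simp add: rfs_integral_def ent_pos_def ent_neg_def)
qed

lemma kl_divergence_eq:
  assumes gs: "gs \<in> mb_candidates"
  shows "rfs_integral (\<lambda>X. kl_term (fm X) (mb_density gs X))
       = (enn2ereal self_pos - enn2ereal self_neg) - rfs_integral (\<lambda>X. xlogy (fm X) (mb_density gs X))"
  using enn2ereal_diff_eq_diff_diff_of_add_eq[OF kl_balance[OF gs] kl_neg_less_top[OF gs]
      ent_pos_less_top[OF gs] self_neg_less_top self_pos_less_top]
  by (simp add: rfs_integral_def kl_pos_def kl_neg_def ent_pos_def ent_neg_def)

end

theorem theorem5:
  fixes H :: "'h set" and A :: "'h list set" and w :: "'h list \<Rightarrow> real"
    and f :: "'h \<Rightarrow> 'a::euclidean_space set \<Rightarrow> real" and N :: nat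
  assumes bern_f: "\<And>h. h \<in> H \<Longrightarrow> is_bernoulli (f h)"
    and A_fin: "finite A"
    and A_sub: "\<And>a. a \<in> A \<Longrightarrow> length a = N \<and> set a \<subseteq> H"
    and w_nonneg: "\<And>a. a \<in> A \<Longrightarrow> 0 \<le> w a"
    and w_sum: "(\<Sum>a\<in>A. w a) = 1"
    and ent_f: "rfs_nn_integral (\<lambda>X. ennreal \<bar>mbm_density A w f N X * ln (mbm_density A w f N X)\<bar>) < \<infinity>"
    and ent_fh: "\<And>h. h \<in> H \<Longrightarrow> rfs_nn_integral (\<lambda>X. ennreal \<bar>f h X * ln (f h X)\<bar>) < \<infinity>"
  defines "G \<equiv> {gs :: ('a set \<Rightarrow> real) list. length gs = N \<and> (\<forall>g\<in>set gs. is_bernoulli g)}"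
  shows "argmax_on G (\<lambda>gs. \<Sum>a\<in>A. ereal (w a) *
            multi_integral N (\<lambda>Xs. xlogy (\<Prod>i<N. f (a ! i) (Xs i))
                 (\<Sum>\<pi> | \<pi> permutes {..<N}. \<Prod>i<N. (gs ! \<pi> i) (Xs i))))
         = argmin_on G (\<lambda>gs. rfs_integral (\<lambda>X. kl_term (mbm_density A w f N X) (mb_density gs X)))
    \<and> argmin_on G (\<lambda>gs. rfs_integral (\<lambda>X. kl_term (mbm_density A w f N X) (mb_density gs X)))
         = argmax_on G (\<lambda>gs. rfs_integral (\<lambda>X. xlogy (mbm_density A w f N X) (mb_density gs X)))"
proof -
  interpret mbm_setting H A w f N
    using bern_f A_fin A_sub w_nonneg w_sum ent_f by unfold_locales auto
  have G: "G = mb_candidates" unfolding G_def mb_candidates_def ..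
  have "argmax_on G (\<lambda>gs. \<Sum>a\<in>A. ereal (w a) *
            multi_integral N (\<lambda>Xs. xlogy (\<Prod>i<N. f (a ! i) (Xs i))
                 (\<Sum>\<pi> | \<pi> permutes {..<N}. \<Prod>i<N. (gs ! \<pi> i) (Xs i))))
      = argmax_on G (\<lambda>gs. rfs_integral (\<lambda>X. xlogy (mbm_density A w f N X) (mb_density gs X)))"
    using labelled_objective_eq log_fact_const_less_top
    unfolding G assoc_density_def sym_density_def
    by (intro argmax_on_add_const[where c = "enn2ereal log_fact_const"]) (auto elim: less_top_ennrealE)
  moreover have "argmin_on G (\<lambda>gs. rfs_integral (\<lambda>X. kl_term (mbm_density A w f N X) (mb_density gs X)))
      = argmax_on G (\<lambda>gs. rfs_integral (\<lambda>X. xlogy (mbm_density A w f N X) (mb_density gs X)))"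
    using kl_divergence_eq abs_enn2ereal_diff_neq_infinity[OF self_pos_less_top self_neg_less_top]
    unfolding G by (intro argmin_on_const_minus_eq_argmax_on) auto
  ultimately show ?thesis by simp
qed

end
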